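(* Let $A$ be a finite alphabet, let $\phi: A^* \to A^*$ be a non-erasing morphism, and let $w \in A^{\mathbf{N}}$ be a pure morphic word generated by $\phi$, i.e. there exist a letter $b \in A$ and a nonempty word $u \in A^*$ with $\phi(b) = bu$ and $w = \lim_{i\to\infty} \phi^i(b)$ (so that $\phi(w) = w$). If for every letter $a \in A$ the frequency of $a$ in $w$ exists, then for every finite word $v \in A^*$ that is a factor of $w$, the frequency of $v$ in $w$ exists.
   Context: For an infinite word $w = w[1]w[2]w[3]\cdots$ and a finite nonempty word $v$ of length $k$, the (ordinary) frequency of $v$ in $w$ is $$\lim_{n\to\infty} \frac{\#\{ i : 1 \le i \le n,\ w[i]w[i+1]\cdots w[i+k-1] = v\}}{n},$$ if this limit exists. A morphism $\phi: A^*\to A^*$ is a monoid homomorphism of the free monoid; it is non-erasing if $\phi(a)$ is nonempty for every $a\in A$. A factor of $w$ is a finite word of the form $w[t]w[t+1]\cdots w[r]$ with $1\le t\le r$. *)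

theory Defs
  imports Complex_Main
begin

text \<open>Infinite words are functions nat => 'a, indexed from 0 (w 0 is the paper's w[1]).\<close>

definition morph_ext :: "('a \<Rightarrow> 'a list) \<Rightarrow> 'a list \<Rightarrow> 'a list" where
  "morph_ext phi xs = concat (map phi xs)"

definition non_erasing :: "('a \<Rightarrow> 'a list) \<Rightarrow> bool" where
  "non_erasing phi \<longleftrightarrow> (\<forall>a. phi a \<noteq> [])"

definition word_limit :: "(nat \<Rightarrow> 'a list) \<Rightarrow> (nat \<Rightarrow> 'a) \<Rightarrow> bool" where
  "word_limit xs w \<longleftrightarrow> (\<forall>n. \<exists>i0. \<forall>i\<ge>i0. n < length (xs i) \<and> xs i ! n = w n)"

definition pure_morphic_gen :: "('a \<Rightarrow> 'a list) \<Rightarrow> (nat \<Rightarrow> 'a) \<Rightarrow> bool" where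
  "pure_morphic_gen phi w \<longleftrightarrow>
     (\<exists>b u. u \<noteq> [] \<and> phi b = b # u \<and> word_limit (\<lambda>i. (morph_ext phi ^^ i) [b]) w)"

definition occurs_at :: "(nat \<Rightarrow> 'a) \<Rightarrow> 'a list \<Rightarrow> nat \<Rightarrow> bool" where
  "occurs_at w v i \<longleftrightarrow> (\<forall>j<length v. w (i + j) = v ! j)"

definition is_factor :: "'a list \<Rightarrow> (nat \<Rightarrow> 'a) \<Rightarrow> bool" where
  "is_factor v w \<longleftrightarrow> v \<noteq> [] \<and> (\<exists>i. occurs_at w v i)"

definition occ_count :: "(nat \<Rightarrow> 'a) \<Rightarrow> 'a list \<Rightarrow> nat \<Rightarrow> nat" where
  "occ_count w v n = card {i. i < n \<and> occurs_at w v i}"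

definition freq_exists :: "(nat \<Rightarrow> 'a) \<Rightarrow> 'a list \<Rightarrow> bool" where
  "freq_exists w v \<longleftrightarrow> (\<exists>L. (\<lambda>n. real (occ_count w v n) / real n) \<longlonglongrightarrow> L)"

end

theory Submission
  imports Defs "HOL-Library.Omega_Words_Fun"
begin

text \<open>Let k = |v|. Occurrences of v in w are occurrences of the letter v in the word W of length-k
  windows of w, and W is a fixed point of the k-block presentation of phi.

  If some letter a of positive frequency has unbounded growth, cut w into the words phi^n(w j): this
  determines the frequency of v up to an error k (\<Sum>b f b) / (\<Sum>b f b |phi^n(b)|), which tends to 0 with n.

  Otherwise letters of unbounded growth have frequency zero, so for a suitable power F of the block
  morphism almost every letter of W is fixed by F. Then no letter of W occurs twice in its own image, as
  this would make the prefixes of W grow exponentially under F. Hence F is triangular on the letters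
  reachable from W 0: every such letter is mapped to smaller letters, except for at most one copy of
  itself. By well-founded induction and Stolz-Cesaro the images F^n(W 0) have polynomial length and a
  convergent proportion of v's, and as the lengths of consecutive images are asymptotically equal, the
  frequency of v exists.\<close>

section \<open>Stolz-Cesaro and polynomially growing sequences\<close>

lemma stolz_cesaro_telescope:
  fixes a b :: "nat \<Rightarrow> real"
  assumes step: "\<And>n. n \<ge> N \<Longrightarrow> \<bar>a (Suc n) - a n - L * (b (Suc n) - b n)\<bar> \<le> r * (b (Suc n) - b n)"
    and "n \<ge> N"
  shows "\<bar>a n - L * b n\<bar> \<le> \<bar>a N - L * b N\<bar> + r * (b n - b N)"
  using \<open>n \<ge> N\<close>
proof (induction n rule: dec_induct)
  case (step n)
  have "\<bar>a (Suc n) - L * b (Suc n)\<bar> \<le> \<bar>a n - L * b n\<bar> + \<bar>a (Suc n) - a n - L * (b (Suc n) - b n)\<bar>"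
    using abs_triangle_ineq[of "a n - L * b n" "a (Suc n) - a n - L * (b (Suc n) - b n)"]
    by (simp add: algebra_simps)
  also have "\<dots> \<le> \<bar>a N - L * b N\<bar> + r * (b n - b N) + r * (b (Suc n) - b n)"
    using step.IH assms(1)[OF step.hyps(1)] by linarith
  finally show ?case by (simp add: algebra_simps)
qed simp

lemma stolz_cesaro:
  fixes a b :: "nat \<Rightarrow> real"
  assumes mono: "\<And>n. b n < b (Suc n)" and top: "filterlim b at_top sequentially"
    and lim: "(\<lambda>n. (a (Suc n) - a n) / (b (Suc n) - b n)) \<longlonglongrightarrow> L"
  shows "(\<lambda>n. a n / b n) \<longlonglongrightarrow> L"
proof (rule LIMSEQ_I)
  fix r :: real assume r: "r > 0"
  obtain N where N: "\<And>n. n \<ge> N \<Longrightarrow> \<bar>(a (Suc n) - a n) / (b (Suc n) - b n) - L\<bar> < r/2"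
    using LIMSEQ_D[OF lim, of "r/2"] r by auto
  have step: "\<bar>a (Suc n) - a n - L * (b (Suc n) - b n)\<bar> \<le> r/2 * (b (Suc n) - b n)" if "n \<ge> N" for n
  proof -
    have d: "b (Suc n) - b n > 0" using mono[of n] by simp
    have "\<bar>(a (Suc n) - a n - L * (b (Suc n) - b n)) / (b (Suc n) - b n)\<bar> < r/2"
      using N[OF that] d by (simp add: field_simps)
    thus ?thesis using d by (simp add: abs_divide pos_divide_less_eq)
  qed
  define c where "c = \<bar>a N - L * b N\<bar> + r/2 * \<bar>b N\<bar>"
  have "eventually (\<lambda>n. b n > max (2 * c / r) 0) sequentially"
    using top unfolding filterlim_at_top_dense by blast
  hence "eventually (\<lambda>n. b n > max (2 * c / r) 0 \<and> n \<ge> N) sequentially"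
    using eventually_ge_at_top by (rule eventually_conj)
  then obtain M where M: "\<And>n. n \<ge> M \<Longrightarrow> b n > max (2 * c / r) 0 \<and> n \<ge> N"
    by (auto simp: eventually_sequentially)
  have "\<bar>a n / b n - L\<bar> < r" if "n \<ge> M" for n
  proof -
    have bn: "b n > 2 * c / r" "b n > 0" "n \<ge> N" using M that by auto
    have "\<bar>a n - L * b n\<bar> \<le> \<bar>a N - L * b N\<bar> + r/2 * (b n - b N)"
      by (rule stolz_cesaro_telescope[where a=a and b=b and L=L, OF step bn(3)])
    also have "\<dots> \<le> c + r/2 * b n"
      using mult_left_mono[OF abs_ge_minus_self[of "b N"], of r] r by (simp add: c_def algebra_simps)
    also have "\<dots> < r * b n" using bn r by (simp add: field_simps)
    finally have "\<bar>a n - L * b n\<bar> / b n < r" using bn by (simp add: pos_divide_less_eq)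
    moreover have "a n / b n - L = (a n - L * b n) / b n" using bn by (simp add: field_simps)
    ultimately show ?thesis using bn(2) by (simp add: abs_divide)
  qed
  thus "\<exists>no. \<forall>n\<ge>no. norm (a n / b n - L) < r" by (intro exI[of _ M]) simp
qed


definition regular_growth :: "(nat \<Rightarrow> real) \<Rightarrow> (nat \<Rightarrow> real) \<Rightarrow> bool" where
  "regular_growth A Oc \<longleftrightarrow> (\<forall>n. A n > 0) \<and> (\<exists>d C. C > 0 \<and> (\<lambda>n. A n / real n ^ d) \<longlonglongrightarrow> C)
     \<and> (\<exists>\<rho>. (\<lambda>n. Oc n / A n) \<longlonglongrightarrow> \<rho>)"

lemma LIMSEQ_divide_power_raise:
  assumes "(\<lambda>n. A n / real n ^ d) \<longlonglongrightarrow> C" "d \<le> D"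
  shows "(\<lambda>n. A n / real n ^ D) \<longlonglongrightarrow> (if d = D then C else 0)"
proof (cases "d = D")
  case True then show ?thesis using assms by simp
next
  case False
  hence lt: "d < D" using assms by simp
  have z: "(\<lambda>n. inverse (real n ^ (D - d))) \<longlonglongrightarrow> 0"
    by (rule tendsto_inverse_0_at_top, rule filterlim_pow_at_top) (use lt in \<open>auto intro: filterlim_real_sequentially\<close>)
  have "(\<lambda>n. A n / real n ^ d * inverse (real n ^ (D - d))) \<longlonglongrightarrow> C * 0"
    by (rule tendsto_mult[OF assms(1) z])
  moreover have "eventually (\<lambda>n. A n / real n ^ d * inverse (real n ^ (D - d)) = A n / real n ^ D) sequentially"
  proof (rule eventually_sequentiallyI[of 1])
    fix n :: nat assume "n \<ge> 1"
    hence "real n ^ D = real n ^ d * real n ^ (D - d)" using lt by (simp add: power_add[symmetric])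
    thus "A n / real n ^ d * inverse (real n ^ (D - d)) = A n / real n ^ D"
      by (simp add: divide_inverse)
  qed
  ultimately show ?thesis using False by (auto intro: Lim_transform_eventually)
qed

lemma regular_growth_const:
  assumes "c > 0"
  shows "regular_growth (\<lambda>_. c) (\<lambda>_. b)"
proof -
  have "(\<lambda>n::nat. c / real n ^ 0) \<longlonglongrightarrow> c" "(\<lambda>n::nat. b / c) \<longlonglongrightarrow> b / c" by simp_all
  then show ?thesis using assms unfolding regular_growth_def by blast
qed

lemma regular_growth_add:
  assumes "regular_growth A Oa" "regular_growth B Ob"
  shows "regular_growth (\<lambda>n. A n + B n) (\<lambda>n. Oa n + Ob n)"
proof -
  from assms obtain d1 C1 \<rho>1 d2 C2 \<rho>2 where
    pA: "\<forall>n. A n > 0" and pB: "\<forall>n. B n > 0" and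
    C1: "C1 > 0" "(\<lambda>n. A n / real n ^ d1) \<longlonglongrightarrow> C1" and C2: "C2 > 0" "(\<lambda>n. B n / real n ^ d2) \<longlonglongrightarrow> C2"
    and r1: "(\<lambda>n. Oa n / A n) \<longlonglongrightarrow> \<rho>1" and r2: "(\<lambda>n. Ob n / B n) \<longlonglongrightarrow> \<rho>2"
    unfolding regular_growth_def by blast
  define D where "D = max d1 d2"
  define K1 where "K1 = (if d1 = D then C1 else 0)"
  define K2 where "K2 = (if d2 = D then C2 else 0)"
  have l1: "(\<lambda>n. A n / real n ^ D) \<longlonglongrightarrow> K1" unfolding K1_def by (rule LIMSEQ_divide_power_raise[OF C1(2)]) (simp add: D_def)
  have l2: "(\<lambda>n. B n / real n ^ D) \<longlonglongrightarrow> K2" unfolding K2_def by (rule LIMSEQ_divide_power_raise[OF C2(2)]) (simp add: D_def)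
  have K: "K1 + K2 > 0" "K1 \<ge> 0" "K2 \<ge> 0" using C1 C2 by (auto simp: K1_def K2_def D_def)
  have ls: "(\<lambda>n. (A n + B n) / real n ^ D) \<longlonglongrightarrow> K1 + K2"
    using tendsto_add[OF l1 l2] by (simp add: add_divide_distrib)
  have "(\<lambda>n. ((Oa n / A n) * (A n / real n ^ D) + (Ob n / B n) * (B n / real n ^ D)) / ((A n + B n) / real n ^ D))
     \<longlonglongrightarrow> (\<rho>1 * K1 + \<rho>2 * K2) / (K1 + K2)"
    using K by (intro tendsto_intros r1 r2 l1 l2 ls) auto
  moreover have "eventually (\<lambda>n. ((Oa n / A n) * (A n / real n ^ D) + (Ob n / B n) * (B n / real n ^ D)) / ((A n + B n) / real n ^ D)
     = (Oa n + Ob n) / (A n + B n)) sequentially"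
  proof (rule eventually_sequentiallyI[of 1])
    fix n :: nat assume "n \<ge> 1"
    then show "((Oa n / A n) * (A n / real n ^ D) + (Ob n / B n) * (B n / real n ^ D)) / ((A n + B n) / real n ^ D)
     = (Oa n + Ob n) / (A n + B n)"
      using pA[rule_format, of n] pB[rule_format, of n] by (simp add: add_divide_distrib[symmetric])
  qed
  ultimately have "(\<lambda>n. (Oa n + Ob n) / (A n + B n)) \<longlonglongrightarrow> (\<rho>1 * K1 + \<rho>2 * K2) / (K1 + K2)"
    by (rule Lim_transform_eventually)
  thus ?thesis unfolding regular_growth_def using pA pB ls K by (auto intro: add_pos_pos)
qed

lemma regular_growth_sum_list:
  assumes "xs \<noteq> []" "\<forall>z\<in>set xs. regular_growth (A z) (Oc z)"
  shows "regular_growth (\<lambda>n. \<Sum>z\<leftarrow>xs. A z n) (\<lambda>n. \<Sum>z\<leftarrow>xs. Oc z n)"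
  using assms
proof (induction xs)
  case Nil then show ?case by simp
next
  case (Cons z zs)
  show ?case
  proof (cases "zs = []")
    case True then show ?thesis using Cons.prems by simp
  next
    case False
    then have "regular_growth (\<lambda>n. \<Sum>z\<leftarrow>zs. A z n) (\<lambda>n. \<Sum>z\<leftarrow>zs. Oc z n)" using Cons by simp
    moreover have "regular_growth (A z) (Oc z)" using Cons.prems by simp
    ultimately show ?thesis using regular_growth_add[of "A z" "Oc z"] by simp
  qed
qed

lemma regular_growth_shift:
  assumes "regular_growth (\<lambda>n. A (Suc n)) (\<lambda>n. Oc (Suc n))" "A 0 > 0"
  shows "regular_growth A Oc"
proof -
  from assms obtain d C \<rho> where pA: "\<forall>n. A (Suc n) > 0" and C: "C > 0" "(\<lambda>n. A (Suc n) / real n ^ d) \<longlonglongrightarrow> C"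
    and r: "(\<lambda>n. Oc (Suc n) / A (Suc n)) \<longlonglongrightarrow> \<rho>" unfolding regular_growth_def by blast
  have "(\<lambda>n. A (Suc n) / real n ^ d * (real n / real (Suc n)) ^ d) \<longlonglongrightarrow> C * 1 ^ d"
    by (intro tendsto_intros C LIMSEQ_n_over_Suc_n)
  moreover have "eventually (\<lambda>n. A (Suc n) / real n ^ d * (real n / real (Suc n)) ^ d = A (Suc n) / real (Suc n) ^ d) sequentially"
    by (rule eventually_sequentiallyI[of 1]) (simp add: power_divide)
  ultimately have "(\<lambda>n. A (Suc n) / real (Suc n) ^ d) \<longlonglongrightarrow> C" by (auto intro: Lim_transform_eventually)
  hence "(\<lambda>n. A n / real n ^ d) \<longlonglongrightarrow> C" by (rule LIMSEQ_imp_Suc)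
  moreover have "(\<lambda>n. Oc n / A n) \<longlonglongrightarrow> \<rho>" using r by (rule LIMSEQ_imp_Suc)
  moreover have "\<forall>n. A n > 0" using pA assms(2) by (metis not0_implies_Suc)
  ultimately show ?thesis unfolding regular_growth_def using C(1) by blast
qed

lemma Suc_power_diff_bounds:
  fixes n :: nat
  shows "real (Suc d) * real n ^ d \<le> real (Suc n) ^ Suc d - real n ^ Suc d"
    and "real (Suc n) ^ Suc d - real n ^ Suc d \<le> real (Suc d) * real (Suc n) ^ d"
proof -
  have e: "real (Suc n) ^ Suc d - real n ^ Suc d = (\<Sum>p<Suc d. real (Suc n) ^ p * real n ^ (d - p))"
    using diff_power_eq_sum[of "real (Suc n)" d "real n"] by simp
  have lo: "real n ^ d \<le> real (Suc n) ^ p * real n ^ (d - p)" if "p < Suc d" for p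
  proof -
    have "real n ^ d = real n ^ p * real n ^ (d - p)" using that by (simp add: power_add[symmetric])
    also have "\<dots> \<le> real (Suc n) ^ p * real n ^ (d - p)" by (intro mult_right_mono power_mono) auto
    finally show ?thesis .
  qed
  have hi: "real (Suc n) ^ p * real n ^ (d - p) \<le> real (Suc n) ^ d" if "p < Suc d" for p
  proof -
    have "real (Suc n) ^ p * real n ^ (d - p) \<le> real (Suc n) ^ p * real (Suc n) ^ (d - p)"
      by (intro mult_left_mono power_mono) auto
    also have "\<dots> = real (Suc n) ^ d" using that by (simp add: power_add[symmetric])
    finally show ?thesis .
  qed
  show "real (Suc d) * real n ^ d \<le> real (Suc n) ^ Suc d - real n ^ Suc d"
  proof -
    have "(\<Sum>p<Suc d. real n ^ d) \<le> (\<Sum>p<Suc d. real (Suc n) ^ p * real n ^ (d - p))"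
      by (rule sum_mono) (rule lo, simp)
    thus ?thesis unfolding e by simp
  qed
  show "real (Suc n) ^ Suc d - real n ^ Suc d \<le> real (Suc d) * real (Suc n) ^ d"
  proof -
    have "(\<Sum>p<Suc d. real (Suc n) ^ p * real n ^ (d - p)) \<le> (\<Sum>p<Suc d. real (Suc n) ^ d)"
      by (rule sum_mono) (rule hi, simp)
    thus ?thesis unfolding e by simp
  qed
qed

lemma LIMSEQ_power_over_Suc_power_diff:
  "(\<lambda>n. real n ^ d / (real (Suc n) ^ Suc d - real n ^ Suc d)) \<longlonglongrightarrow> 1 / real (Suc d)"
proof (rule real_tendsto_sandwich)
  show "(\<lambda>n. (real n / real (Suc n)) ^ d / real (Suc d)) \<longlonglongrightarrow> 1 / real (Suc d)"
    using tendsto_divide[OF tendsto_power[OF LIMSEQ_n_over_Suc_n, of d] tendsto_const[of "real (Suc d)"]] by simp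
  show "(\<lambda>n. 1 / real (Suc d)) \<longlonglongrightarrow> 1 / real (Suc d)" by simp
  show "eventually (\<lambda>n. (real n / real (Suc n)) ^ d / real (Suc d) \<le> real n ^ d / (real (Suc n) ^ Suc d - real n ^ Suc d)) sequentially"
  proof (rule always_eventually, rule allI)
    fix n
    have "real n ^ Suc d < real (Suc n) ^ Suc d" by (rule power_strict_mono) auto
    hence pos: "real (Suc n) ^ Suc d - real n ^ Suc d > 0" by simp
    have "(real n / real (Suc n)) ^ d / real (Suc d) = real n ^ d / (real (Suc d) * real (Suc n) ^ d)"
      by (simp add: power_divide)
    also have "\<dots> \<le> real n ^ d / (real (Suc n) ^ Suc d - real n ^ Suc d)"
      by (intro divide_left_mono Suc_power_diff_bounds(2) mult_pos_pos pos) auto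
    finally show "(real n / real (Suc n)) ^ d / real (Suc d) \<le> real n ^ d / (real (Suc n) ^ Suc d - real n ^ Suc d)" .
  qed
  show "eventually (\<lambda>n. real n ^ d / (real (Suc n) ^ Suc d - real n ^ Suc d) \<le> 1 / real (Suc d)) sequentially"
  proof (rule always_eventually, rule allI)
    fix n
    have "real n ^ Suc d < real (Suc n) ^ Suc d" by (rule power_strict_mono) auto
    hence pos: "real (Suc n) ^ Suc d - real n ^ Suc d > 0" by simp
    show "real n ^ d / (real (Suc n) ^ Suc d - real n ^ Suc d) \<le> 1 / real (Suc d)"
      using Suc_power_diff_bounds(1)[of d n] pos by (simp add: divide_simps mult.commute)
  qed
qed

lemma LIMSEQ_partial_sums_divide_power:
  assumes lim: "(\<lambda>n. g n / real n ^ d) \<longlonglongrightarrow> C" and step: "\<And>n. A (Suc n) = A n + g n"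
  shows "(\<lambda>n. A n / real n ^ Suc d) \<longlonglongrightarrow> C / real (Suc d)"
proof (rule stolz_cesaro)
  show "real n ^ Suc d < real (Suc n) ^ Suc d" for n by (rule power_strict_mono) auto
  show "filterlim (\<lambda>n. real n ^ Suc d) at_top sequentially"
    by (rule filterlim_pow_at_top) (auto intro: filterlim_real_sequentially)
  have "(\<lambda>n. g n / real n ^ d * (real n ^ d / (real (Suc n) ^ Suc d - real n ^ Suc d))) \<longlonglongrightarrow> C * (1 / real (Suc d))"
    by (intro tendsto_mult lim LIMSEQ_power_over_Suc_power_diff)
  moreover have "eventually (\<lambda>n. g n / real n ^ d * (real n ^ d / (real (Suc n) ^ Suc d - real n ^ Suc d))
      = (A (Suc n) - A n) / (real (Suc n) ^ Suc d - real n ^ Suc d)) sequentially"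
    by (rule eventually_sequentiallyI[of 1]) (simp add: step)
  ultimately have "(\<lambda>n. (A (Suc n) - A n) / (real (Suc n) ^ Suc d - real n ^ Suc d)) \<longlonglongrightarrow> C * (1 / real (Suc d))"
    by (rule Lim_transform_eventually)
  then show "(\<lambda>n. (A (Suc n) - A n) / (real (Suc n) ^ Suc d - real n ^ Suc d)) \<longlonglongrightarrow> C / real (Suc d)"
    by simp
qed

lemma filterlim_at_top_if_LIMSEQ_divide_power:
  assumes "(\<lambda>n. A n / real n ^ Suc d) \<longlonglongrightarrow> C" "C > 0"
  shows "filterlim A at_top sequentially"
proof -
  have "filterlim (\<lambda>n. real n ^ Suc d) at_top sequentially"
    by (rule filterlim_pow_at_top) (auto intro: filterlim_real_sequentially)
  then have "filterlim (\<lambda>n. A n / real n ^ Suc d * real n ^ Suc d) at_top sequentially"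
    by (rule filterlim_tendsto_pos_mult_at_top[OF assms])
  moreover have ev: "eventually (\<lambda>n. A n / real n ^ Suc d * real n ^ Suc d = A n) sequentially"
    by (rule eventually_sequentiallyI[of 1]) simp
  ultimately show ?thesis using filterlim_cong[OF refl refl ev] by blast
qed

lemma regular_growth_partial_sums:
  assumes g: "regular_growth g h" and A: "\<And>n. A (Suc n) = A n + g n" "A 0 > 0"
    and B: "\<And>n. B (Suc n) = B n + h n"
  shows "regular_growth A B"
proof -
  obtain d C \<rho> where g_pos: "\<forall>n. g n > 0" and "C > 0" and C: "(\<lambda>n. g n / real n ^ d) \<longlonglongrightarrow> C"
    and \<rho>: "(\<lambda>n. h n / g n) \<longlonglongrightarrow> \<rho>"
    using g unfolding regular_growth_def by blast
  have "A n > 0" for n by (induction n) (use A g_pos in \<open>auto intro: add_pos_pos\<close>)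
  moreover have deg: "(\<lambda>n. A n / real n ^ Suc d) \<longlonglongrightarrow> C / real (Suc d)"
    by (rule LIMSEQ_partial_sums_divide_power[OF C A(1)])
  moreover have "(\<lambda>n. B n / A n) \<longlonglongrightarrow> \<rho>"
  proof (rule stolz_cesaro)
    show "A n < A (Suc n)" for n using A(1)[of n] g_pos by simp
    show "filterlim A at_top sequentially"
      by (rule filterlim_at_top_if_LIMSEQ_divide_power[OF deg]) (use \<open>C > 0\<close> in simp)
    show "(\<lambda>n. (B (Suc n) - B n) / (A (Suc n) - A n)) \<longlonglongrightarrow> \<rho>" using \<rho> by (simp add: A(1) B)
  qed
  moreover have "C / real (Suc d) > 0" using \<open>C > 0\<close> by simp
  ultimately show ?thesis unfolding regular_growth_def by blast
qed

section \<open>Homomorphisms of free monoids\<close>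

definition list_hom :: "('b list \<Rightarrow> 'c list) \<Rightarrow> bool" where
  "list_hom F \<longleftrightarrow> (\<forall>xs ys. F (xs @ ys) = F xs @ F ys)"

definition nonerasing :: "('b list \<Rightarrow> 'c list) \<Rightarrow> bool" where
  "nonerasing F \<longleftrightarrow> (\<forall>y. F [y] \<noteq> [])"

lemma list_hom_append: "list_hom F \<Longrightarrow> F (xs @ ys) = F xs @ F ys"
  by (simp add: list_hom_def)

lemma list_hom_Nil: "list_hom F \<Longrightarrow> F [] = []"
  using list_hom_append[of F "[]" "[]"] by simp

lemma list_hom_Cons: "list_hom F \<Longrightarrow> F (x # xs) = F [x] @ F xs"
  using list_hom_append[of F "[x]" xs] by simp

lemma list_hom_concat:
  assumes "list_hom F"
  shows "F xs = concat (map (\<lambda>y. F [y]) xs)"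
proof (induction xs)
  case (Cons x xs)
  then show ?case using list_hom_Cons[OF assms, of x xs] by simp
qed (simp add: list_hom_Nil[OF assms])

lemma list_hom_funpow: "list_hom (F :: 'b list \<Rightarrow> 'b list) \<Longrightarrow> list_hom (F ^^ n)"
  by (induction n) (simp_all add: list_hom_def)

lemma list_hom_morph_ext: "list_hom (morph_ext phi)"
  by (simp add: list_hom_def morph_ext_def)

lemma nonerasing_morph_ext: "non_erasing phi \<Longrightarrow> nonerasing (morph_ext phi)"
  by (simp add: nonerasing_def morph_ext_def non_erasing_def)

lemma nonerasing_length_le:
  assumes "list_hom F" "nonerasing F"
  shows "length xs \<le> length (F xs)"
proof (induction xs)
  case (Cons x xs)
  have "F [x] \<noteq> []" using assms(2) by (simp add: nonerasing_def)
  then show ?case using Cons list_hom_Cons[OF assms(1), of x xs] by (cases "F [x]") auto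
qed simp

lemma funpow_Suc_apply: "(F ^^ Suc n) xs = (F ^^ n) (F xs)"
  by (simp add: funpow_Suc_right del: funpow.simps)

lemma nonerasing_funpow:
  assumes "list_hom (F :: 'b list \<Rightarrow> 'b list)" "nonerasing F"
  shows "nonerasing (F ^^ n)"
proof (induction n)
  case (Suc n)
  have "length (F [y]) \<le> length ((F ^^ n) (F [y]))" for y
    by (rule nonerasing_length_le[OF list_hom_funpow[OF assms(1)] Suc])
  then show ?case using assms(2) unfolding nonerasing_def funpow_Suc_apply
    by (metis le_zero_eq length_0_conv)
qed (simp add: nonerasing_def)

lemma list_hom_length: "list_hom F \<Longrightarrow> length (F xs) = (\<Sum>y\<leftarrow>xs. length (F [y]))"
  by (subst list_hom_concat) (auto simp: length_concat comp_def)

lemma list_hom_count_list: "list_hom F \<Longrightarrow> count_list (F xs) v = (\<Sum>y\<leftarrow>xs. count_list (F [y]) v)"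
  by (subst list_hom_concat) (auto simp: count_list_concat comp_def)

lemma of_nat_sum_list_map: "real (\<Sum>y\<leftarrow>xs. f y) = (\<Sum>y\<leftarrow>xs. real (f y))"
  by (induction xs) auto

definition triangular_on :: "'b set \<Rightarrow> ('b \<times> 'b) set \<Rightarrow> ('b list \<Rightarrow> 'b list) \<Rightarrow> bool" where
  "triangular_on S r F \<longleftrightarrow> (\<forall>y\<in>S. (\<forall>z\<in>set (F [y]). (z, y) \<in> r) \<or>
     (\<exists>\<alpha> \<beta>. F [y] = \<alpha> @ y # \<beta> \<and> (\<forall>z\<in>set (\<alpha> @ \<beta>). (z, y) \<in> r)))"

text \<open>A letter sent to smaller letters grows like the sum of their growths; a letter y sent to
  \<alpha> y \<beta> accumulates the growth of \<alpha> \<beta> as partial sums, which raises the degree by one.\<close>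

lemma regular_growth_of_triangular:
  fixes F :: "'b list \<Rightarrow> 'b list"
  assumes hF: "list_hom F" and nF: "nonerasing F" and wf: "wf r"
    and closed: "\<forall>y\<in>S. set (F [y]) \<subseteq> S" and tri: "triangular_on S r F" and "y \<in> S"
  shows "regular_growth (\<lambda>n. real (length ((F ^^ n) [y]))) (\<lambda>n. real (count_list ((F ^^ n) [y]) v))"
  using wf \<open>y \<in> S\<close>
proof (induction y rule: wf_induct_rule)
  case (less y)
  let ?G = "\<lambda>z. regular_growth (\<lambda>n. real (length ((F ^^ n) [z]))) (\<lambda>n. real (count_list ((F ^^ n) [z]) v))"
  have hp: "list_hom (F ^^ n)" for n by (rule list_hom_funpow[OF hF])
  have IH: "?G z" if "z \<in> set (F [y])" "(z, y) \<in> r" for z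
  proof -
    have "z \<in> S" using closed less.prems that(1) by blast
    then show ?thesis by (rule less.IH[OF that(2)])
  qed
  have length_step: "real (length ((F ^^ Suc n) [y])) = (\<Sum>z\<leftarrow>F [y]. real (length ((F ^^ n) [z])))" for n
    unfolding funpow_Suc_apply list_hom_length[OF hp[of n], of "F [y]"] of_nat_sum_list_map ..
  have count_step: "real (count_list ((F ^^ Suc n) [y]) v) = (\<Sum>z\<leftarrow>F [y]. real (count_list ((F ^^ n) [z]) v))" for n
    unfolding funpow_Suc_apply list_hom_count_list[OF hp[of n], of "F [y]"] of_nat_sum_list_map ..
  consider "\<forall>z\<in>set (F [y]). (z, y) \<in> r"
    | \<alpha> \<beta> where "F [y] = \<alpha> @ y # \<beta>" "\<forall>z\<in>set (\<alpha> @ \<beta>). (z, y) \<in> r"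
    using tri less.prems unfolding triangular_on_def by blast
  then show ?case
  proof cases
    case 1
    have "F [y] \<noteq> []" using nF by (simp add: nonerasing_def)
    have "regular_growth (\<lambda>n. real (length ((F ^^ Suc n) [y]))) (\<lambda>n. real (count_list ((F ^^ Suc n) [y]) v))"
      unfolding length_step count_step
      by (rule regular_growth_sum_list[OF \<open>F [y] \<noteq> []\<close>]) (use IH 1 in blast)
    thus ?thesis by (rule regular_growth_shift) simp
  next
    case (2 \<alpha> \<beta>)
    show ?thesis
    proof (cases "\<alpha> @ \<beta> = []")
      case True
      have "(F ^^ n) [y] = [y]" for n
        by (induction n) (use 2 True in \<open>simp_all add: funpow_Suc_apply del: funpow.simps\<close>)
      then show ?thesis using regular_growth_const[of 1 "real (count_list [y] v)"] by simp
    next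
      case False
      have g: "regular_growth (\<lambda>n. \<Sum>z\<leftarrow>\<alpha> @ \<beta>. real (length ((F ^^ n) [z])))
                 (\<lambda>n. \<Sum>z\<leftarrow>\<alpha> @ \<beta>. real (count_list ((F ^^ n) [z]) v))"
        by (rule regular_growth_sum_list[OF False]) (use IH 2 in auto)
      show ?thesis
        by (rule regular_growth_partial_sums[OF g])
          (simp_all add: length_step count_step 2(1) del: funpow.simps)
    qed
  qed
qed

section \<open>Fixed points of morphisms\<close>

text \<open>An infinite word X is a fixed point of F iff F maps every prefix of X to a prefix of X.\<close>

definition fixes_word :: "('b list \<Rightarrow> 'b list) \<Rightarrow> (nat \<Rightarrow> 'b) \<Rightarrow> bool" where
  "fixes_word F X \<longleftrightarrow> (\<forall>M. F (prefix M X) = prefix (length (F (prefix M X))) X)"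

lemma fixes_wordD: "fixes_word F X \<Longrightarrow> F (prefix M X) = prefix (length (F (prefix M X))) X"
  by (simp add: fixes_word_def)

lemma fixes_word_funpow:
  assumes "fixes_word F X"
  shows "fixes_word (F ^^ n) X"
proof (induction n)
  case (Suc n)
  show ?case unfolding fixes_word_def
  proof
    fix M
    let ?Y = "(F ^^ n) (prefix M X)"
    have "?Y = prefix (length ?Y) X" by (rule fixes_wordD[OF Suc])
    then have E: "(F ^^ Suc n) (prefix M X) = F (prefix (length ?Y) X)"
      using arg_cong[of _ _ F] by simp
    show "(F ^^ Suc n) (prefix M X) = prefix (length ((F ^^ Suc n) (prefix M X))) X"
      unfolding E by (rule fixes_wordD[OF assms])
  qed
qed (simp add: fixes_word_def)

lemma morph_ext_funpow_Suc_seed: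
  assumes "phi b = b # u"
  shows "(morph_ext phi ^^ Suc i) [b] = (morph_ext phi ^^ i) [b] @ (morph_ext phi ^^ i) u"
proof -
  have "(morph_ext phi ^^ Suc i) [b] = (morph_ext phi ^^ i) (b # u)"
    by (simp add: funpow_Suc_apply assms morph_ext_def del: funpow.simps)
  then show ?thesis by (simp add: list_hom_Cons[OF list_hom_funpow[OF list_hom_morph_ext], of _ _ b u] del: funpow.simps)
qed

lemma morph_ext_funpow_seed_length:
  assumes "non_erasing phi" "phi b = b # u" "u \<noteq> []"
  shows "length ((morph_ext phi ^^ i) [b]) \<ge> Suc i"
proof (induction i)
  case (Suc i)
  have "length u \<le> length ((morph_ext phi ^^ i) u)"
    by (rule nonerasing_length_le[OF list_hom_funpow[OF list_hom_morph_ext]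
          nonerasing_funpow[OF list_hom_morph_ext nonerasing_morph_ext[OF assms(1)]]])
  with Suc assms(3) show ?case
    unfolding morph_ext_funpow_Suc_seed[of phi b u, OF assms(2)] by (cases u) auto
qed simp

lemma word_limit_prefix:
  assumes lim: "word_limit P w" and chain: "\<And>i. \<exists>t. P (Suc i) = P i @ t"
  shows "prefix (length (P i)) w = P i"
proof (rule nth_equalityI)
  fix n assume "n < length (prefix (length (P i)) w)"
  hence n: "n < length (P i)" by simp
  obtain i0 where i0: "\<forall>j\<ge>i0. n < length (P j) \<and> P j ! n = w n"
    using lim unfolding word_limit_def by blast
  have "\<exists>t. P j = P i @ t" if "i \<le> j" for j
    using that
  proof (induction j rule: dec_induct)
    case (step j)
    then obtain t t' where "P j = P i @ t" "P (Suc j) = P j @ t'" using chain by blast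
    then show ?case by auto
  qed simp
  then obtain t where "P (max i i0) = P i @ t" by (meson max.cobounded1)
  then show "prefix (length (P i)) w ! n = P i ! n"
    using i0[rule_format, of "max i i0"] n by (simp add: nth_append)
qed simp

lemma pure_morphic_gen_fixes_word:
  assumes ne: "non_erasing phi" and gen: "pure_morphic_gen phi w"
  obtains b u where "phi b = b # u" "u \<noteq> []" "w 0 = b" "fixes_word (morph_ext phi) w"
proof -
  obtain b u where pb: "phi b = b # u" and u: "u \<noteq> []"
    and lim: "word_limit (\<lambda>i. (morph_ext phi ^^ i) [b]) w"
    using gen unfolding pure_morphic_gen_def by blast
  define P where "P i = (morph_ext phi ^^ i) [b]" for i
  have hF: "list_hom (morph_ext phi)" by (rule list_hom_morph_ext)
  have P: "prefix (length (P i)) w = P i" for i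
    unfolding P_def using lim by (rule word_limit_prefix) (use morph_ext_funpow_Suc_seed[of phi b u, OF pb] in blast)
  have "fixes_word (morph_ext phi) w"
    unfolding fixes_word_def
  proof
    fix M
    have "M \<le> length (P M)"
      using Suc_leD[OF morph_ext_funpow_seed_length[of phi b u M, OF ne pb u]] by (simp add: P_def)
    then have "take M (P M) = prefix M w"
      by (subst P[of M, symmetric]) (simp add: min_def)
    moreover have "P (Suc M) = morph_ext phi (take M (P M) @ drop M (P M))" by (simp add: P_def)
    ultimately have split: "P (Suc M) = morph_ext phi (prefix M w) @ morph_ext phi (drop M (P M))"
      by (simp add: list_hom_append[OF hF])
    let ?A = "morph_ext phi (prefix M w)"
    have "?A = take (length ?A) (P (Suc M))" using split by simp
    also have "\<dots> = take (length ?A) (prefix (length (P (Suc M))) w)"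
      using arg_cong[OF P[of "Suc M", symmetric], of "take (length ?A)"] .
    also have "\<dots> = prefix (length ?A) w" using split by (simp add: min_def)
    finally show "?A = prefix (length ?A) w" .
  qed
  moreover have "w 0 = b" using P[of 0] by (simp add: P_def)
  ultimately show thesis using that pb u by blast
qed

section \<open>The block presentation\<close>

definition windows :: "nat \<Rightarrow> 'b list \<Rightarrow> nat \<Rightarrow> 'b list list" where
  "windows k xs m = map (\<lambda>j. take k (drop j xs)) [0..<m]"

text \<open>The k-block presentation of phi, on the alphabet of words of length k: a block y is sent to the
  length-k windows of phi(y) that start inside phi(hd y). Words of other lengths are fixed (they do
  not occur in block words).\<close>

definition block_morph :: "nat \<Rightarrow> ('a \<Rightarrow> 'a list) \<Rightarrow> 'a list \<Rightarrow> 'a list list" where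
  "block_morph k phi y = (if length y = k then windows k (morph_ext phi y) (length (phi (hd y))) else [y])"

lemma length_windows[simp]: "length (windows k xs m) = m" by (simp add: windows_def)
lemma nth_windows[simp]: "j < m \<Longrightarrow> windows k xs m ! j = take k (drop j xs)" by (simp add: windows_def)

lemma windows_add: "windows k xs (a + b) = windows k xs a @ map (\<lambda>j. take k (drop (a + j) xs)) [0..<b]"
  by (rule nth_equalityI) (auto simp: nth_append)

lemma windows_take: "L + k \<le> T + 1 \<Longrightarrow> windows k (take T xs) L = windows k xs L"
  by (rule nth_equalityI) (auto simp: take_drop min_def)

lemma morph_ext_length_le: "non_erasing phi \<Longrightarrow> length xs \<le> length (morph_ext phi xs)"
  by (rule nonerasing_length_le[OF list_hom_morph_ext nonerasing_morph_ext])

lemma windows_infix: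
  assumes "n + k \<le> length Q + 1"
  shows "map (\<lambda>j. take k (drop (length P + j) (P @ Q @ R))) [0..<n] = windows k Q n"
  by (rule nth_equalityI) (use assms in \<open>auto simp: windows_def\<close>)

lemma block_morph_windows:
  assumes k: "0 < k" and ne: "non_erasing phi" and len: "M + k \<le> length xs + 1"
  shows "morph_ext (block_morph k phi) (windows k xs M)
    = windows k (morph_ext phi xs) (length (morph_ext phi (take M xs)))"
  using len
proof (induction M)
  case (Suc M)
  define y where "y = take k (drop M xs)"
  have M: "M < length xs" using Suc.prems k by simp
  have y: "length y = k" "hd y = xs ! M" using Suc.prems M k by (simp_all add: y_def hd_drop_conv_nth)
  have xs: "xs = take M xs @ y @ drop (M + k) xs"
    by (simp add: y_def) (metis append_take_drop_id drop_drop add.commute)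
  define l where "l = length (phi (xs ! M))"
  have "morph_ext phi y = phi (xs ! M) @ morph_ext phi (tl y)"
    using y k by (cases y) (auto simp: morph_ext_def)
  moreover have "length (morph_ext phi (tl y)) \<ge> k - 1" using morph_ext_length_le[OF ne, of "tl y"] y by simp
  ultimately have l: "l + k \<le> length (morph_ext phi y) + 1" unfolding l_def by simp
  have "morph_ext (block_morph k phi) (windows k xs (Suc M))
      = morph_ext (block_morph k phi) (windows k xs M) @ block_morph k phi y"
    by (simp add: windows_def y_def morph_ext_def)
  also have "\<dots> = windows k (morph_ext phi xs) (length (morph_ext phi (take M xs))) @ windows k (morph_ext phi y) l"
    using Suc y by (simp add: block_morph_def[of k phi y] l_def)
  also have "\<dots> = windows k (morph_ext phi xs) (length (morph_ext phi (take M xs)) + l)"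
  proof -
    have "morph_ext phi xs = morph_ext phi (take M xs) @ morph_ext phi y @ morph_ext phi (drop (M + k) xs)"
      by (subst xs) (simp add: morph_ext_def)
    then show ?thesis
      unfolding windows_add using windows_infix[OF l, of "morph_ext phi (take M xs)"] by simp
  qed
  also have "length (morph_ext phi (take M xs)) + l = length (morph_ext phi (take (Suc M) xs))"
    using M by (simp add: l_def take_Suc_conv_app_nth morph_ext_def)
  finally show ?case .
qed (simp add: morph_ext_def windows_def)

lemma block_morph_funpow_windows:
  assumes k: "0 < k" and ne: "non_erasing phi" and len: "M + k \<le> length xs + 1"
  shows "(morph_ext (block_morph k phi) ^^ n) (windows k xs M) = windows k ((morph_ext phi ^^ n) xs) (length ((morph_ext phi ^^ n) (take M xs)))"
proof (induction n)
  case 0 have "M \<le> length xs" using len k by simp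
  then show ?case by (simp add: min_def)
next
  case (Suc n)
  define X where "X = (morph_ext phi ^^ n) xs"
  define L where "L = length ((morph_ext phi ^^ n) (take M xs))"
  have hp: "list_hom (morph_ext phi ^^ n)" by (rule list_hom_funpow[OF list_hom_morph_ext])
  have nep: "nonerasing (morph_ext phi ^^ n)"
    by (rule nonerasing_funpow[OF list_hom_morph_ext nonerasing_morph_ext[OF ne]])
  have XL: "X = (morph_ext phi ^^ n) (take M xs) @ (morph_ext phi ^^ n) (drop M xs)"
    unfolding X_def using list_hom_append[OF hp, of "take M xs" "drop M xs"] by simp
  have "length ((morph_ext phi ^^ n) (drop M xs)) \<ge> length (drop M xs)"
    by (rule nonerasing_length_le[OF hp nep])
  hence lenX: "L + k \<le> length X + 1" using XL len unfolding L_def by simp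
  have tX: "take L X = (morph_ext phi ^^ n) (take M xs)" using XL L_def by simp
  have "(morph_ext (block_morph k phi) ^^ Suc n) (windows k xs M) = morph_ext (block_morph k phi) (windows k X L)"
    using Suc by (simp add: X_def L_def)
  also have "\<dots> = windows k (morph_ext phi X) (length (morph_ext phi (take L X)))" by (rule block_morph_windows[OF k ne lenX])
  also have "\<dots> = windows k (morph_ext phi X) (length (morph_ext phi ((morph_ext phi ^^ n) (take M xs))))"
    by (simp only: tX)
  finally show ?case by (simp add: X_def)
qed

definition block_word :: "nat \<Rightarrow> (nat \<Rightarrow> 'a) \<Rightarrow> nat \<Rightarrow> 'a list" where
  "block_word k w i = w [i \<rightarrow> i + k]"

lemma length_block_word[simp]: "length (block_word k w i) = k" by (simp add: block_word_def)

lemma prefix_block_word: "0 < k \<Longrightarrow> prefix M (block_word k w) = windows k (prefix (M + k - 1) w) M"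
proof (rule nth_equalityI)
  fix i assume k: "0 < k" and i: "i < length (prefix M (block_word k w))"
  show "prefix M (block_word k w) ! i = windows k (prefix (M + k - 1) w) M ! i"
  proof (rule nth_equalityI)
    show "length (prefix M (block_word k w) ! i) = length (windows k (prefix (M + k - 1) w) M ! i)" using i k by simp
    fix j assume "j < length (prefix M (block_word k w) ! i)"
    then show "prefix M (block_word k w) ! i ! j = windows k (prefix (M + k - 1) w) M ! i ! j" using i k
      by (simp add: block_word_def)
  qed
qed simp

lemma nonerasing_block_morph: "non_erasing phi \<Longrightarrow> nonerasing (morph_ext (block_morph k phi))"
  unfolding nonerasing_def morph_ext_def block_morph_def windows_def non_erasing_def by simp

lemma block_morph_funpow_prefix:
  assumes k: "0 < k" and ne: "non_erasing phi" and fp: "fixes_word (morph_ext phi ^^ n) w"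
  shows "(morph_ext (block_morph k phi) ^^ n) (prefix M (block_word k w)) = prefix (length ((morph_ext phi ^^ n) (prefix M w))) (block_word k w)"
proof -
  define G where "G = morph_ext phi ^^ n"
  have hG: "list_hom G" unfolding G_def by (rule list_hom_funpow[OF list_hom_morph_ext])
  have nG: "nonerasing G" unfolding G_def by (rule nonerasing_funpow[OF list_hom_morph_ext nonerasing_morph_ext[OF ne]])
  define L where "L = length (G (prefix M w))"
  define L' where "L' = length (G (prefix (M + k - 1) w))"
  have tk: "take M (prefix (M + k - 1) w) = prefix M w" using k by (simp add: min_def)
  have sp: "prefix (M + k - 1) w = prefix M w @ drop M (prefix (M + k - 1) w)"
    using tk by (metis append_take_drop_id)
  have "length (G (drop M (prefix (M + k - 1) w))) \<ge> k - 1"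
    using nonerasing_length_le[OF hG nG, of "drop M (prefix (M + k - 1) w)"] k by simp
  moreover have "G (prefix (M + k - 1) w) = G (prefix M w) @ G (drop M (prefix (M + k - 1) w))"
    using list_hom_append[OF hG, of "prefix M w" "drop M (prefix (M + k - 1) w)"] sp by simp
  ultimately have LL: "L + k - 1 \<le> L'" unfolding L_def L'_def by simp
  have "(morph_ext (block_morph k phi) ^^ n) (prefix M (block_word k w)) = windows k (G (prefix (M + k - 1) w)) L"
    unfolding prefix_block_word[OF k] using block_morph_funpow_windows[OF k ne, of M "prefix (M + k - 1) w" n] k tk
    by (simp add: G_def L_def)
  also have "G (prefix (M + k - 1) w) = prefix L' w"
    unfolding L'_def G_def using fixes_wordD[OF fp] by metis
  also have "windows k (prefix L' w) L = windows k (take (L + k - 1) (prefix L' w)) L"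
    by (rule windows_take[symmetric]) simp
  also have "take (L + k - 1) (prefix L' w) = prefix (L + k - 1) w" using LL by (simp add: min_def)
  also have "windows k (prefix (L + k - 1) w) L = prefix L (block_word k w)" by (rule prefix_block_word[OF k, symmetric])
  finally show ?thesis by (simp add: L_def G_def)
qed

lemma fixes_word_block_word:
  assumes k: "0 < k" and ne: "non_erasing phi" and fp: "fixes_word (morph_ext phi ^^ n) w"
  shows "fixes_word (morph_ext (block_morph k phi) ^^ n) (block_word k w)"
  unfolding fixes_word_def using block_morph_funpow_prefix[OF assms] by simp

lemma block_morph_funpow_letter:
  assumes k: "0 < k" and ne: "non_erasing phi" and ly: "length y = k"
  shows "(morph_ext (block_morph k phi) ^^ n) [y] = windows k ((morph_ext phi ^^ n) y) (length ((morph_ext phi ^^ n) [hd y]))"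
proof -
  have y1: "[y] = windows k y 1" using ly by (simp add: windows_def)
  have t1: "take 1 y = [hd y]" using ly k by (cases y) auto
  show ?thesis unfolding y1 using block_morph_funpow_windows[OF k ne, of 1 y n] ly t1 by simp
qed

lemma count_list_prefix: "count_list (prefix N X) v = card {i. i < N \<and> X i = v}"
  unfolding count_list_eq_length_filter length_filter_conv_card
  by (rule arg_cong[where f=card]) auto

lemma occ_count_block_word: "occ_count w v N = count_list (prefix N (block_word (length v) w)) v"
proof -
  have e: "occurs_at w v i \<longleftrightarrow> block_word (length v) w i = v" for i
  proof
    assume "occurs_at w v i"
    thus "block_word (length v) w i = v" unfolding occurs_at_def block_word_def by (intro nth_equalityI) auto
  next
    assume h: "block_word (length v) w i = v"
    show "occurs_at w v i" unfolding occurs_at_def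
    proof (intro allI impI)
      fix j assume j: "j < length v"
      have "block_word (length v) w i ! j = v ! j" by (rule arg_cong[where f="\<lambda>l. l ! j", OF h])
      thus "w (i + j) = v ! j" using j by (simp add: block_word_def)
    qed
  qed
  have "{i. i < N \<and> occurs_at w v i} = {i. i < N \<and> block_word (length v) w i = v}" using e by blast
  thus ?thesis unfolding occ_count_def count_list_prefix by simp
qed

section \<open>Frequencies along subsequences of prefixes\<close>

lemma mono_unbounded_bracket:
  fixes L :: "nat \<Rightarrow> nat"
  assumes mono: "mono L" and unbounded: "\<And>B. \<exists>M. L M > B" and "L M0 \<le> N"
  obtains M where "M \<ge> M0" "L M \<le> N" "N < L (Suc M)"
proof -
  define M' where "M' = (LEAST M. N < L M)"
  have N: "N < L M'" unfolding M'_def using unbounded by (rule LeastI_ex)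
  have "M0 < M'"
  proof (rule ccontr)
    assume "\<not> M0 < M'"
    then have "L M' \<le> L M0" using mono by (simp add: mono_def)
    then show False using N \<open>L M0 \<le> N\<close> by simp
  qed
  moreover have "\<not> N < L (M' - 1)" unfolding M'_def by (rule not_less_Least) (use calculation M'_def in simp)
  ultimately show thesis using that[of "M' - 1"] N by simp
qed

text \<open>Sandwiching N between consecutive values of L transfers bounds on F along L to all N.\<close>

lemma density_sandwich:
  fixes F L :: "nat \<Rightarrow> nat" and lo hi :: "nat \<Rightarrow> real"
  assumes F: "mono F" and L: "mono L" "\<And>B. \<exists>M. L M > B" "\<And>M. L (Suc M) > 0"
    and lo: "\<And>M. lo M \<le> real (F (L M))" "\<And>M. 0 \<le> lo M"
    and hi: "\<And>M. real (F (L M)) \<le> hi M"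
    and lim_lo: "(\<lambda>M. lo M / real (L (Suc M))) \<longlonglongrightarrow> \<alpha>"
    and lim_hi: "(\<lambda>M. hi (Suc M) / real (L M)) \<longlonglongrightarrow> \<beta>"
    and e: "e > 0"
  shows "\<exists>N0. \<forall>N\<ge>N0. \<alpha> - e \<le> real (F N) / real N \<and> real (F N) / real N \<le> \<beta> + e"
proof -
  obtain M1 where M1: "\<And>M. M \<ge> M1 \<Longrightarrow> \<bar>lo M / real (L (Suc M)) - \<alpha>\<bar> < e"
    using LIMSEQ_D[OF lim_lo e] by auto
  obtain M2 where M2: "\<And>M. M \<ge> M2 \<Longrightarrow> \<bar>hi (Suc M) / real (L M) - \<beta>\<bar> < e"
    using LIMSEQ_D[OF lim_hi e] by auto
  define M0 where "M0 = Suc (max M1 M2)"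
  have "\<alpha> - e \<le> real (F N) / real N \<and> real (F N) / real N \<le> \<beta> + e" if "N \<ge> L M0" for N
  proof -
    obtain M where M: "M \<ge> M0" "L M \<le> N" "N < L (Suc M)"
      using mono_unbounded_bracket[OF L(1,2) \<open>N \<ge> L M0\<close>] .
    have LM: "L M > 0" using L(3)[of "M - 1"] M(1) by (simp add: M0_def)
    have F1: "real (F (L M)) \<le> real (F N)" and F2: "real (F N) \<le> real (F (L (Suc M)))"
      using F M by (simp_all add: mono_def)
    have "\<alpha> - e < lo M / real (L (Suc M))" using M1[of M] M(1) unfolding M0_def by linarith
    also have "\<dots> \<le> lo M / real N" using lo(2)[of M] M LM by (intro divide_left_mono) auto
    also have "\<dots> \<le> real (F N) / real N" using lo(1)[of M] F1 by (intro divide_right_mono) auto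
    finally have "\<alpha> - e \<le> real (F N) / real N" by simp
    moreover have "real (F N) / real N \<le> hi (Suc M) / real N"
      using hi[of "Suc M"] F2 by (intro divide_right_mono) auto
    moreover have "\<dots> \<le> hi (Suc M) / real (L M)"
      using order_trans[OF of_nat_0_le_iff hi[of "Suc M"]] M LM by (intro divide_left_mono) auto
    moreover have "\<dots> < \<beta> + e" using M2[of M] M(1) unfolding M0_def by linarith
    ultimately show ?thesis by linarith
  qed
  then show ?thesis by blast
qed

lemma windows_append: "a + k \<le> length P + 1 \<or> a = 0 \<Longrightarrow> windows k (P @ Q) a = windows k P a"
  by (rule nth_equalityI) (auto simp: windows_def)

lemma count_windows_append_bounds:
  assumes "length P = l" and k: "0 < k"
  shows "count_list (windows k P (l + 1 - k)) v \<le> count_list (windows k (P @ Q) l) v"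
    and "count_list (windows k (P @ Q) l) v \<le> count_list (windows k P (l + 1 - k)) v + k"
proof -
  define a where "a = l + 1 - k"
  have al: "a \<le> l" using k by (simp add: a_def)
  have "windows k (P @ Q) l = windows k (P @ Q) (a + (l - a))" using al by simp
  also have "\<dots> = windows k P a @ map (\<lambda>j. take k (drop (a + j) (P @ Q))) [0..<l - a]"
    unfolding windows_add by (subst windows_append) (auto simp: a_def assms)
  finally have e: "windows k (P @ Q) l = windows k P a @ map (\<lambda>j. take k (drop (a + j) (P @ Q))) [0..<l - a]" .
  have "count_list (map (\<lambda>j. take k (drop (a + j) (P @ Q))) [0..<l - a]) v \<le> l - a"
    using count_le_length by (metis length_map length_upt minus_nat.diff_0)
  moreover have "l - a \<le> k" by (simp add: a_def)
  ultimately show "count_list (windows k P (l + 1 - k)) v \<le> count_list (windows k (P @ Q) l) v"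
    and "count_list (windows k (P @ Q) l) v \<le> count_list (windows k P (l + 1 - k)) v + k"
    unfolding e a_def[symmetric] by simp_all
qed

definition letter_count :: "(nat \<Rightarrow> 'a) \<Rightarrow> 'a \<Rightarrow> nat \<Rightarrow> real" where
  "letter_count w a M = real (count_list (prefix M w) a)"

lemma letter_count_Suc: "letter_count w a (Suc M) = letter_count w a M + (if w M = a then 1 else 0)"
  by (simp add: letter_count_def)

lemma sum_list_map_prefix: "(\<Sum>y\<leftarrow>prefix M X. h y) = (\<Sum>j<M. h (X j))"
  by (induction M) auto

lemma sum_lessThan_by_letter_count:
  fixes h :: "'a::finite \<Rightarrow> real"
  shows "(\<Sum>j<M. h (w j)) = (\<Sum>a\<in>UNIV. h a * letter_count w a M)"
proof (induction M)
  case 0 then show ?case by (simp add: letter_count_def)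
next
  case (Suc M)
  have "(\<Sum>a\<in>UNIV. h a * letter_count w a (Suc M)) = (\<Sum>a\<in>UNIV. h a * letter_count w a M + (if w M = a then h a else 0))"
    by (rule sum.cong) (auto simp: letter_count_Suc algebra_simps)
  also have "\<dots> = (\<Sum>a\<in>UNIV. h a * letter_count w a M) + h (w M)"
    by (simp add: sum.distrib)
  finally show ?case using Suc by simp
qed

lemma LIMSEQ_sum_letter_count:
  fixes h :: "'a::finite \<Rightarrow> real"
  assumes freq: "\<And>a. (\<lambda>M. letter_count w a M / real M) \<longlonglongrightarrow> f a"
  shows "(\<lambda>M. (\<Sum>a\<in>UNIV. h a * letter_count w a M) / real M) \<longlonglongrightarrow> (\<Sum>a\<in>UNIV. h a * f a)"
    and "(\<lambda>M. (\<Sum>a\<in>UNIV. h a * letter_count w a (Suc M)) / real M) \<longlonglongrightarrow> (\<Sum>a\<in>UNIV. h a * f a)"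
proof -
  have "(\<lambda>M. (\<Sum>a\<in>UNIV. h a * (letter_count w a M / real M))) \<longlonglongrightarrow> (\<Sum>a\<in>UNIV. h a * f a)"
    by (intro tendsto_intros freq)
  thus "(\<lambda>M. (\<Sum>a\<in>UNIV. h a * letter_count w a M) / real M) \<longlonglongrightarrow> (\<Sum>a\<in>UNIV. h a * f a)"
    by (simp add: sum_divide_distrib)
  have s: "(\<lambda>M. letter_count w a (Suc M) / real M) \<longlonglongrightarrow> f a" for a
  proof -
    have "(\<lambda>M. letter_count w a (Suc M) / real (Suc M) * (real (Suc M) / real M)) \<longlonglongrightarrow> f a * 1"
      by (intro tendsto_intros LIMSEQ_Suc[OF freq] LIMSEQ_Suc_n_over_n)
    moreover have "eventually (\<lambda>M. letter_count w a (Suc M) / real (Suc M) * (real (Suc M) / real M) = letter_count w a (Suc M) / real M) sequentially"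
      by (rule eventually_sequentiallyI[of 1]) simp
    ultimately show ?thesis by (auto intro: Lim_transform_eventually)
  qed
  have "(\<lambda>M. (\<Sum>a\<in>UNIV. h a * (letter_count w a (Suc M) / real M))) \<longlonglongrightarrow> (\<Sum>a\<in>UNIV. h a * f a)"
    by (intro tendsto_intros s)
  thus "(\<lambda>M. (\<Sum>a\<in>UNIV. h a * letter_count w a (Suc M)) / real M) \<longlonglongrightarrow> (\<Sum>a\<in>UNIV. h a * f a)"
    by (simp add: sum_divide_distrib)
qed

lemma mono_count_list_prefix: "mono (\<lambda>N. count_list (prefix N X) v)"
  unfolding mono_iff_le_Suc by simp

section \<open>A frequent letter of unbounded growth\<close>

lemma convergent_if_eventually_in_small_intervals:
  fixes R :: "nat \<Rightarrow> real"
  assumes small: "\<And>e. e > 0 \<Longrightarrow> \<exists>\<alpha> \<beta> N0. \<beta> - \<alpha> < e \<and> (\<forall>N\<ge>N0. \<alpha> \<le> R N \<and> R N \<le> \<beta>)"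
  shows "convergent R"
proof -
  have "Cauchy R"
  proof (rule CauchyI)
    fix e :: real assume "e > 0"
    then obtain \<alpha> \<beta> N0 where "\<beta> - \<alpha> < e" and bounds: "\<forall>N\<ge>N0. \<alpha> \<le> R N \<and> R N \<le> \<beta>"
      using small by blast
    have "norm (R m - R n) < e" if "m \<ge> N0" "n \<ge> N0" for m n
    proof -
      have "\<alpha> \<le> R m" "R m \<le> \<beta>" "\<alpha> \<le> R n" "R n \<le> \<beta>" using bounds that by auto
      then show ?thesis using \<open>\<beta> - \<alpha> < e\<close> unfolding real_norm_def abs_less_iff by linarith
    qed
    then show "\<exists>M. \<forall>m\<ge>M. \<forall>n\<ge>M. norm (R m - R n) < e" by blast
  qed
  then show ?thesis by (simp add: Cauchy_convergent_iff)
qed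

lemma letter_frequency_nonneg:
  "(\<lambda>M. letter_count w a M / real M) \<longlonglongrightarrow> f \<Longrightarrow> f \<ge> 0"
  by (rule LIMSEQ_le_const) (auto simp: letter_count_def)

lemma length_funpow_prefix_by_letter:
  fixes w :: "nat \<Rightarrow> 'a::finite"
  assumes "list_hom G"
  shows "real (length (G (prefix M w))) = (\<Sum>a\<in>UNIV. real (length (G [a])) * letter_count w a M)"
  unfolding list_hom_length[OF assms, of "prefix M w"] sum_list_map_prefix of_nat_sum
  by (rule sum_lessThan_by_letter_count)

text \<open>At level n, w is the concatenation of the words phi^n(w j). An occurrence of v in the block word
  starts inside one of them, and lies either entirely inside it or in one of its last k positions.\<close>

lemma count_block_word_level_bounds:
  fixes n :: nat and v :: "'a list"
  assumes k: "0 < k" and ne: "non_erasing phi" and fp: "fixes_word (morph_ext phi) w"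
  defines "G \<equiv> morph_ext phi ^^ n"
  defines "g \<equiv> \<lambda>a. count_list (windows k (G [a]) (length (G [a]) + 1 - k)) v"
  shows "(\<Sum>j<M. g (w j)) \<le> count_list (prefix (length (G (prefix M w))) (block_word k w)) v"
    and "count_list (prefix (length (G (prefix M w))) (block_word k w)) v \<le> (\<Sum>j<M. g (w j) + k)"
proof -
  define K where "K = morph_ext (block_morph k phi) ^^ n"
  define W where "W = block_word k w"
  have hG: "list_hom G" unfolding G_def by (rule list_hom_funpow[OF list_hom_morph_ext])
  have "prefix (length (G (prefix M w))) W = K (prefix M W)"
    using block_morph_funpow_prefix[OF k ne fixes_word_funpow[OF fp, of n]] by (simp add: W_def K_def G_def)
  then have count: "count_list (prefix (length (G (prefix M w))) W) v = (\<Sum>j<M. count_list (K [W j]) v)"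
    using list_hom_count_list[OF list_hom_funpow[OF list_hom_morph_ext], where xs="prefix M W"]
    by (simp add: K_def sum_list_map_prefix)
  have "g (w j) \<le> count_list (K [W j]) v \<and> count_list (K [W j]) v \<le> g (w j) + k" for j
  proof -
    have Wj: "W j = w j # tl (W j)" using k by (simp add: W_def block_word_def subsequence_def upt_conv_Cons)
    have "hd (W j) = w j" by (subst Wj) simp
    then have "K [W j] = windows k (G (W j)) (length (G [w j]))"
      using block_morph_funpow_letter[OF k ne, of "W j" n] by (simp add: K_def G_def W_def)
    also have "G (W j) = G [w j] @ G (tl (W j))" by (subst Wj) (rule list_hom_Cons[OF hG])
    finally show ?thesis
      using count_windows_append_bounds[OF refl k, where P="G [w j]" and Q="G (tl (W j))" and v=v] by (simp add: g_def)
  qed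
  then show "(\<Sum>j<M. g (w j)) \<le> count_list (prefix (length (G (prefix M w))) (block_word k w)) v"
    and "count_list (prefix (length (G (prefix M w))) (block_word k w)) v \<le> (\<Sum>j<M. g (w j) + k)"
    unfolding count W_def[symmetric] by (auto intro: sum_mono)
qed

lemma block_count_ratio_eventually_bounded:
  fixes phi :: "'a::finite \<Rightarrow> 'a list" and w :: "nat \<Rightarrow> 'a" and n :: nat and v :: "'a list"
  assumes k: "0 < k" and ne: "non_erasing phi" and fp: "fixes_word (morph_ext phi) w"
    and freq: "\<And>a. (\<lambda>M. letter_count w a M / real M) \<longlonglongrightarrow> f a"
  defines "lam \<equiv> \<Sum>a\<in>UNIV. real (length ((morph_ext phi ^^ n) [a])) * f a"
  assumes lam: "lam > 0" and e: "e > 0"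
  shows "\<exists>\<alpha> N0. \<forall>N\<ge>N0. \<alpha> \<le> real (count_list (prefix N (block_word k w)) v) / real N
    \<and> real (count_list (prefix N (block_word k w)) v) / real N \<le> \<alpha> + real k * (\<Sum>a\<in>UNIV. f a) / lam + e"
proof -
  define G where "G = morph_ext phi ^^ n"
  define g where "g a = count_list (windows k (G [a]) (length (G [a]) + 1 - k)) v" for a
  define L where "L M = length (G (prefix M w))" for M
  define lo where "lo M = (\<Sum>a\<in>UNIV. real (g a) * letter_count w a M)" for M
  define hi where "hi M = (\<Sum>a\<in>UNIV. (real (g a) + real k) * letter_count w a M)" for M
  define \<mu> where "\<mu> = (\<Sum>a\<in>UNIV. real (g a) * f a)"
  define \<mu>' where "\<mu>' = (\<Sum>a\<in>UNIV. (real (g a) + real k) * f a)"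
  have hG: "list_hom G" and nG: "nonerasing G"
    unfolding G_def by (rule list_hom_funpow[OF list_hom_morph_ext],
      rule nonerasing_funpow[OF list_hom_morph_ext nonerasing_morph_ext[OF ne]])
  have L_Suc: "L (Suc M) = L M + length (G [w M])" for M
    by (simp add: L_def list_hom_append[OF hG])
  have L_ge: "M \<le> L M" for M unfolding L_def using nonerasing_length_le[OF hG nG, of "prefix M w"] by simp
  have L_real: "real (L M) = (\<Sum>a\<in>UNIV. real (length (G [a])) * letter_count w a M)" for M
    unfolding L_def by (rule length_funpow_prefix_by_letter[OF hG])
  have lower: "(\<Sum>j<M. g (w j)) \<le> count_list (prefix (L M) (block_word k w)) v" for M
    using count_block_word_level_bounds(1)[OF k ne fp, where n=n and v=v] by (simp add: g_def L_def G_def)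
  have upper: "count_list (prefix (L M) (block_word k w)) v \<le> (\<Sum>j<M. g (w j) + k)" for M
    using count_block_word_level_bounds(2)[OF k ne fp, where n=n and v=v] by (simp add: g_def L_def G_def)
  have "\<exists>N0. \<forall>N\<ge>N0. \<mu> / lam - e/2 \<le> real (count_list (prefix N (block_word k w)) v) / real N
    \<and> real (count_list (prefix N (block_word k w)) v) / real N \<le> \<mu>' / lam + e/2"
  proof (rule density_sandwich[where L=L and lo=lo and hi=hi])
    show "mono L" unfolding mono_iff_le_Suc by (simp add: L_Suc)
    show "\<exists>M. L M > B" for B using L_ge[of "Suc B"] by (intro exI[of _ "Suc B"]) simp
    show "L (Suc M) > 0" for M using L_ge[of "Suc M"] by simp
    show "lo M \<le> real (count_list (prefix (L M) (block_word k w)) v)" for M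
      using lower[of M] by (simp add: lo_def sum_lessThan_by_letter_count[symmetric] flip: of_nat_sum)
    show "real (count_list (prefix (L M) (block_word k w)) v) \<le> hi M" for M
      using upper[of M] by (simp add: hi_def sum_lessThan_by_letter_count[symmetric] flip: of_nat_sum of_nat_add)
    show "0 \<le> lo M" for M unfolding lo_def sum_lessThan_by_letter_count[symmetric] by (intro sum_nonneg) simp
    have "(\<lambda>M. (lo M / real M) / (real (L (Suc M)) / real M)) \<longlonglongrightarrow> \<mu> / lam"
      unfolding lo_def L_real \<mu>_def lam_def G_def
      by (intro tendsto_divide LIMSEQ_sum_letter_count[OF freq]) (use lam in \<open>simp add: lam_def\<close>)
    then show "(\<lambda>M. lo M / real (L (Suc M))) \<longlonglongrightarrow> \<mu> / lam"
      by (rule Lim_transform_eventually) (rule eventually_sequentiallyI[of 1], simp)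
    have "(\<lambda>M. (hi (Suc M) / real M) / (real (L M) / real M)) \<longlonglongrightarrow> \<mu>' / lam"
      unfolding hi_def L_real \<mu>'_def lam_def G_def
      by (intro tendsto_divide LIMSEQ_sum_letter_count[OF freq]) (use lam in \<open>simp add: lam_def\<close>)
    then show "(\<lambda>M. hi (Suc M) / real (L M)) \<longlonglongrightarrow> \<mu>' / lam"
      by (rule Lim_transform_eventually) (rule eventually_sequentiallyI[of 1], simp)
  qed (simp_all add: mono_count_list_prefix e)
  moreover have "\<mu>' / lam + e/2 = (\<mu> / lam - e/2) + real k * (\<Sum>a\<in>UNIV. f a) / lam + e"
    unfolding \<mu>'_def \<mu>_def by (simp add: distrib_right sum.distrib sum_distrib_left add_divide_distrib)
  ultimately show ?thesis by (metis (no_types, lifting))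
qed

lemma convergent_block_count_ratio_growing_letter:
  fixes phi :: "'a::finite \<Rightarrow> 'a list" and w :: "nat \<Rightarrow> 'a"
  assumes k: "0 < k" and ne: "non_erasing phi" and fp: "fixes_word (morph_ext phi) w"
    and freq: "\<And>a. (\<lambda>M. letter_count w a M / real M) \<longlonglongrightarrow> f a"
    and a0: "f a0 > 0" and grows: "\<And>B. \<exists>n. real (length ((morph_ext phi ^^ n) [a0])) > B"
  shows "convergent (\<lambda>N. real (count_list (prefix N (block_word k w)) v) / real N)"
proof (rule convergent_if_eventually_in_small_intervals)
  fix e :: real assume e: "e > 0"
  define S where "S = (\<Sum>a\<in>UNIV. f a)"
  have f: "f a \<ge> 0" for a by (rule letter_frequency_nonneg[OF freq])
  obtain n where n: "real (length ((morph_ext phi ^^ n) [a0])) > 2 * real k * S / (e * f a0)"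
    using grows by blast
  define lam where "lam = (\<Sum>a\<in>UNIV. real (length ((morph_ext phi ^^ n) [a])) * f a)"
  have "real (length ((morph_ext phi ^^ n) [a0])) * f a0 \<le> lam"
    unfolding lam_def by (rule member_le_sum) (auto intro: f mult_nonneg_nonneg)
  moreover have "2 * real k * S / e < real (length ((morph_ext phi ^^ n) [a0])) * f a0"
    using n a0 e by (simp add: field_simps)
  moreover have "0 \<le> 2 * real k * S / e"
    unfolding S_def using e by (intro divide_nonneg_pos mult_nonneg_nonneg sum_nonneg f) auto
  ultimately have "2 * real k * S / e < lam" "0 < lam" by linarith+
  then have lam: "0 < lam" "real k * S / lam < e / 2" using e by (simp_all add: field_simps)
  obtain \<alpha> N0 where "\<forall>N\<ge>N0. \<alpha> \<le> real (count_list (prefix N (block_word k w)) v) / real N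
    \<and> real (count_list (prefix N (block_word k w)) v) / real N \<le> \<alpha> + real k * S / lam + e / 2"
    using block_count_ratio_eventually_bounded[OF k ne fp freq, of n, folded lam_def, OF lam(1), of "e/2" v] e
    unfolding S_def by auto
  moreover have "(\<alpha> + real k * S / lam + e / 2) - \<alpha> < e" using lam(2) by linarith
  ultimately show "\<exists>\<alpha> \<beta> N0. \<beta> - \<alpha> < e \<and> (\<forall>N\<ge>N0. \<alpha> \<le> real (count_list (prefix N (block_word k w)) v) / real N
    \<and> real (count_list (prefix N (block_word k w)) v) / real N \<le> \<beta>)" by blast
qed

section \<open>Frequent letters of bounded growth\<close>

text \<open>A finite orbit is eventually periodic, and fact N is a multiple of the period for large N.\<close>

lemma eventually_funpow_fact_idem:
  fixes f :: "'b \<Rightarrow> 'b"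
  assumes fin: "finite (range (\<lambda>n. (f ^^ n) s))"
  shows "eventually (\<lambda>N. (f ^^ (fact N + fact N)) s = (f ^^ fact N) s) sequentially"
proof -
  have "\<not> inj (\<lambda>n. (f ^^ n) s)" using fin by (metis finite_imageD infinite_UNIV_nat)
  then obtain i j where ij: "i < j" "(f ^^ i) s = (f ^^ j) s"
    unfolding inj_def by (metis linorder_neqE_nat)
  define p where "p = j - i"
  have p: "p > 0" using ij by (simp add: p_def)
  have per: "(f ^^ (n + p)) s = (f ^^ n) s" if "n \<ge> i" for n
  proof -
    have e1: "n + p = (n - i) + j" using that ij by (simp add: p_def)
    have e2: "n = (n - i) + i" using that by simp
    have "(f ^^ (n + p)) s = (f ^^ (n - i)) ((f ^^ j) s)" unfolding e1 funpow_add by simp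
    also have "\<dots> = (f ^^ (n - i)) ((f ^^ i) s)" using ij by simp
    also have "\<dots> = (f ^^ ((n - i) + i)) s" unfolding funpow_add by simp
    finally show ?thesis using e2 by simp
  qed
  have perm: "(f ^^ (n + t * p)) s = (f ^^ n) s" if "n \<ge> i" for n t
  proof (induction t)
    case (Suc t)
    have "(f ^^ (n + Suc t * p)) s = (f ^^ ((n + t * p) + p)) s" by (simp add: algebra_simps)
    also have "\<dots> = (f ^^ (n + t * p)) s" by (rule per) (use that in simp)
    finally show ?case using Suc by simp
  qed simp
  show ?thesis unfolding eventually_sequentially
  proof (intro exI allI impI)
    fix N assume N: "N \<ge> max i p"
    have "p dvd fact N" using p N by (intro dvd_fact) auto
    then obtain t where t: "fact N = t * p" by (metis dvd_def mult.commute)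
    have "fact N \<ge> N" by (rule fact_ge_self)
    hence "fact N \<ge> i" using N by simp
    thus "(f ^^ (fact N + fact N)) s = (f ^^ fact N) s" using perm[of "fact N" t] t by simp
  qed
qed

definition bounded_growth :: "('a \<Rightarrow> 'a list) \<Rightarrow> 'a \<Rightarrow> bool" where
  "bounded_growth phi a \<longleftrightarrow> (\<exists>B. \<forall>n. length ((morph_ext phi ^^ n) [a]) \<le> B)"

definition image_letters :: "('b list \<Rightarrow> 'b list) \<Rightarrow> 'b set \<Rightarrow> 'b set" where
  "image_letters F T = (\<Union>z\<in>T. set (F [z]))"

lemma image_letters_funpow_mono: "A \<subseteq> B \<Longrightarrow> (image_letters F ^^ n) A \<subseteq> (image_letters F ^^ n) B"
  by (induction n) (auto simp: image_letters_def)

lemma set_funpow_image_letters: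
  assumes "list_hom F"
  shows "set ((F ^^ n) xs) = (image_letters F ^^ n) (set xs)"
proof (induction n arbitrary: xs)
  case (Suc n)
  have "set (F xs) = image_letters F (set xs)" using list_hom_concat[OF assms, of xs] by (simp add: image_letters_def)
  then show ?case using Suc by (simp add: funpow_Suc_apply funpow_Suc_right del: funpow.simps)
qed simp

lemma mem_funpow_image_letters_idem:
  assumes idem: "(image_letters F ^^ (m + m)) {y} = (image_letters F ^^ m) {y}"
    and y: "y \<in> (image_letters F ^^ n) {y}" and "m \<ge> 1" "n \<ge> 1"
  shows "y \<in> (image_letters F ^^ m) {y}"
proof -
  let ?G = "image_letters F"
  have "y \<in> (?G ^^ (n * j)) {y}" for j
  proof (induction j)
    case (Suc j)
    have "(?G ^^ (n * j)) {y} \<subseteq> (?G ^^ (n * j)) ((?G ^^ n) {y})"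
      using y by (intro image_letters_funpow_mono) simp
    also have "\<dots> = (?G ^^ (n * j + n)) {y}" by (simp add: funpow_add)
    also have "n * j + n = n * Suc j" by simp
    finally show ?case using Suc by blast
  qed simp
  moreover have "(?G ^^ (Suc j * m)) {y} = (?G ^^ m) {y}" for j
  proof (induction j)
    case (Suc j)
    have "(?G ^^ (Suc (Suc j) * m)) {y} = (?G ^^ m) ((?G ^^ (Suc j * m)) {y})"
      by (simp only: mult_Suc funpow_add comp_apply)
    also have "\<dots> = (?G ^^ (m + m)) {y}" using Suc by (simp add: funpow_add)
    finally show ?case using idem by simp
  qed simp
  ultimately have "y \<in> (?G ^^ (n * m)) {y}" "(?G ^^ (Suc (n - 1) * m)) {y} = (?G ^^ m) {y}" by blast+
  then show ?thesis using \<open>n \<ge> 1\<close> by simp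
qed

lemma length_block_morph:
  assumes k: "0 < k" and ne: "non_erasing phi" and lz: "length z = k" and x: "x \<in> set (block_morph k phi z)"
  shows "length x = k"
proof -
  have z: "z = hd z # tl z" using lz k by (cases z) auto
  have "length (morph_ext phi (tl z)) \<ge> k - 1" using morph_ext_length_le[OF ne, of "tl z"] lz by simp
  hence L: "length (morph_ext phi z) \<ge> length (phi (hd z)) + (k - 1)"
    by (subst z) (simp add: morph_ext_def)
  from x obtain j where j: "j < length (phi (hd z))" and xj: "x = take k (drop j (morph_ext phi z))"
    using lz by (auto simp: block_morph_def windows_def)
  show ?thesis using L j k xj by simp
qed

lemma set_funpow_subset_closed:
  assumes "list_hom F" and closed: "\<forall>z\<in>S. set (F [z]) \<subseteq> S" and "set xs \<subseteq> S"
  shows "set ((F ^^ n) xs) \<subseteq> S"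
proof -
  have "(image_letters F ^^ n) T \<subseteq> S" if "T \<subseteq> S" for T
    using that by (induction n) (use closed in \<open>auto simp: image_letters_def\<close>)
  then show ?thesis using set_funpow_image_letters[OF assms(1)] assms(3) by simp
qed

lemma eventually_funpow_fact_idem_bounded_growth:
  fixes phi :: "'a::finite \<Rightarrow> 'a list"
  assumes "bounded_growth phi a"
  shows "eventually (\<lambda>N. (morph_ext phi ^^ (fact N + fact N)) [a] = (morph_ext phi ^^ fact N) [a]) sequentially"
proof (rule eventually_funpow_fact_idem)
  obtain B where "\<forall>n. length ((morph_ext phi ^^ n) [a]) \<le> B" using assms by (auto simp: bounded_growth_def)
  then have "range (\<lambda>n. (morph_ext phi ^^ n) [a]) \<subseteq> {xs. set xs \<subseteq> UNIV \<and> length xs \<le> B}"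
    by auto
  then show "finite (range (\<lambda>n. (morph_ext phi ^^ n) [a]))"
    by (rule finite_subset) (rule finite_lists_length_le, simp)
qed

lemma eventually_funpow_fact_idem_blocks:
  fixes phi :: "'a::finite \<Rightarrow> 'a list"
  assumes k: "0 < k" and ne: "non_erasing phi" and "length y = k"
  defines "G \<equiv> image_letters (morph_ext (block_morph k phi))"
  shows "eventually (\<lambda>N. (G ^^ (fact N + fact N)) {y} = (G ^^ fact N) {y}) sequentially"
proof (rule eventually_funpow_fact_idem)
  define S where "S = {y :: 'a list. set y \<subseteq> UNIV \<and> length y = k}"
  have "finite S" unfolding S_def by (rule finite_lists_length_eq) simp
  have closed: "\<forall>z\<in>S. set (morph_ext (block_morph k phi) [z]) \<subseteq> S"
    using length_block_morph[OF k ne] by (auto simp: S_def morph_ext_def)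
  have "(G ^^ n) {y} \<subseteq> S" for n
    using set_funpow_subset_closed[OF list_hom_morph_ext closed, of "[y]" n] \<open>length y = k\<close>
    unfolding G_def set_funpow_image_letters[OF list_hom_morph_ext] by (simp add: S_def)
  then have "range (\<lambda>n. (G ^^ n) {y}) \<subseteq> Pow S" by auto
  then show "finite (range (\<lambda>n. (G ^^ n) {y}))" by (rule finite_subset) (simp add: \<open>finite S\<close>)
qed

lemma exists_stabilizing_power:
  fixes phi :: "'a::finite \<Rightarrow> 'a list"
  assumes k: "0 < k" and ne: "non_erasing phi"
  obtains m where "m \<ge> 1"
    and "\<And>a. bounded_growth phi a \<Longrightarrow> (morph_ext phi ^^ (m + m)) [a] = (morph_ext phi ^^ m) [a]"
    and "\<And>y n. length y = k \<Longrightarrow> n \<ge> 1 \<Longrightarrow> y \<in> set ((morph_ext (block_morph k phi) ^^ n) [y])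
           \<Longrightarrow> y \<in> set ((morph_ext (block_morph k phi) ^^ m) [y])"
proof -
  define K where "K = morph_ext (block_morph k phi)"
  define S where "S = {y :: 'a list. set y \<subseteq> UNIV \<and> length y = k}"
  have "finite S" unfolding S_def by (rule finite_lists_length_eq) simp
  have "eventually (\<lambda>N. \<forall>a. bounded_growth phi a \<longrightarrow>
      (morph_ext phi ^^ (fact N + fact N)) [a] = (morph_ext phi ^^ fact N) [a]) sequentially"
    by (intro eventually_all_finite) (auto intro: eventually_funpow_fact_idem_bounded_growth)
  moreover have "eventually (\<lambda>N. \<forall>y\<in>S.
      (image_letters K ^^ (fact N + fact N)) {y} = (image_letters K ^^ fact N) {y}) sequentially"
    using eventually_funpow_fact_idem_blocks[OF k ne] \<open>finite S\<close>
    by (intro eventually_ball_finite) (auto simp: S_def K_def)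
  ultimately have "eventually (\<lambda>N. (\<forall>a. bounded_growth phi a \<longrightarrow>
      (morph_ext phi ^^ (fact N + fact N)) [a] = (morph_ext phi ^^ fact N) [a]) \<and>
      (\<forall>y\<in>S. (image_letters K ^^ (fact N + fact N)) {y} = (image_letters K ^^ fact N) {y})) sequentially"
    by (rule eventually_conj)
  then obtain N where N: "\<forall>a. bounded_growth phi a \<longrightarrow>
      (morph_ext phi ^^ (fact N + fact N)) [a] = (morph_ext phi ^^ fact N) [a]"
    "\<forall>y\<in>S. (image_letters K ^^ (fact N + fact N)) {y} = (image_letters K ^^ fact N) {y}"
    unfolding eventually_sequentially by blast
  show thesis
  proof (rule that[of "fact N"])
    fix y n assume y: "length y = k" "n \<ge> 1" "y \<in> set ((morph_ext (block_morph k phi) ^^ n) [y])"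
    have "y \<in> (image_letters K ^^ fact N) {y}"
      by (rule mem_funpow_image_letters_idem[of _ _ _ n])
        (use N(2) y in \<open>simp_all add: S_def K_def set_funpow_image_letters[OF list_hom_morph_ext]\<close>)
    then show "y \<in> set ((morph_ext (block_morph k phi) ^^ fact N) [y])"
      by (simp add: K_def set_funpow_image_letters[OF list_hom_morph_ext])
  qed (use N(1) in auto)
qed

definition density_zero :: "(nat \<Rightarrow> bool) \<Rightarrow> bool" where
  "density_zero Q \<longleftrightarrow> (\<lambda>N. real (card {i. i < N \<and> Q i}) / real N) \<longlonglongrightarrow> 0"

lemma density_zero_if_card_le:
  assumes le: "\<And>N. real (card {i. i < N \<and> Q i}) \<le> b N" and lim: "(\<lambda>N. b N / real N) \<longlonglongrightarrow> 0"
  shows "density_zero Q"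
  unfolding density_zero_def
proof (rule real_tendsto_sandwich[OF _ _ tendsto_const lim])
  show "eventually (\<lambda>N. real (card {i. i < N \<and> Q i}) / real N \<le> b N / real N) sequentially"
    using le by (intro always_eventually allI divide_right_mono) auto
qed simp

lemma density_zero_mono: "density_zero Q \<Longrightarrow> (\<And>i. R i \<Longrightarrow> Q i) \<Longrightarrow> density_zero R"
  by (rule density_zero_if_card_le[of _ "\<lambda>N. real (card {i. i < N \<and> Q i})"])
    (auto simp: density_zero_def intro!: card_mono)

lemma density_zero_shift:
  assumes Q: "density_zero Q" and RQ: "\<And>i. R i \<Longrightarrow> \<exists>t<k. Q (i + t)"
  shows "density_zero R"
proof (rule density_zero_if_card_le)
  define c where "c N = real (card {i. i < N \<and> Q i})" for N
  show "real (card {i. i < N \<and> R i}) \<le> real k * c (N + k)" for N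
  proof -
    have "{i. i < N \<and> R i} \<subseteq> (\<Union>t<k. {i. i < N \<and> Q (i + t)})" using RQ by blast
    then have "card {i. i < N \<and> R i} \<le> (\<Sum>t<k. card {i. i < N \<and> Q (i + t)})"
      by (intro order_trans[OF card_mono card_UN_le]) auto
    also have "\<dots> \<le> (\<Sum>t<k. card {i. i < N + k \<and> Q i})"
    proof (rule sum_mono)
      fix t assume "t \<in> {..<k}"
      then have "(\<lambda>i. i + t) ` {i. i < N \<and> Q (i + t)} \<subseteq> {i. i < N + k \<and> Q i}" by auto
      then have "card ((\<lambda>i. i + t) ` {i. i < N \<and> Q (i + t)}) \<le> card {i. i < N + k \<and> Q i}"
        by (intro card_mono) auto
      then show "card {i. i < N \<and> Q (i + t)} \<le> card {i. i < N + k \<and> Q i}"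
        by (simp add: card_image inj_on_def)
    qed
    finally show ?thesis unfolding c_def of_nat_mult[symmetric] of_nat_le_iff by simp
  qed
  have "(\<lambda>N. real k * (c (N + k) / real (N + k)) * (real (N + k) / real N)) \<longlonglongrightarrow> real k * 0 * 1"
  proof (intro tendsto_mult tendsto_const)
    show "(\<lambda>N. c (N + k) / real (N + k)) \<longlonglongrightarrow> 0"
      using LIMSEQ_ignore_initial_segment[OF Q[unfolded density_zero_def], of k] by (simp add: c_def)
    have "(\<lambda>N. 1 + real k / real N) \<longlonglongrightarrow> 1"
      using tendsto_add[OF tendsto_const tendsto_divide_0[OF tendsto_const
          filterlim_at_top_imp_at_infinity[OF filterlim_real_sequentially]], of 1 "real k"] by simp
    then show "(\<lambda>N. real (N + k) / real N) \<longlonglongrightarrow> 1"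
      by (rule Lim_transform_eventually) (rule eventually_sequentiallyI[of 1], simp add: field_simps)
  qed
  then have "(\<lambda>N. real k * (c (N + k) / real (N + k)) * (real (N + k) / real N)) \<longlonglongrightarrow> 0" by simp
  then show "(\<lambda>N. real k * c (N + k) / real N) \<longlonglongrightarrow> 0"
    by (rule Lim_transform_eventually) (rule eventually_sequentiallyI[of 1], simp)
qed

lemma count_list_mult_le_sum_list:
  fixes g :: "'b \<Rightarrow> nat"
  shows "count_list xs c * g c \<le> (\<Sum>z\<leftarrow>xs. g z)"
  by (induction xs) auto

lemma count_list_funpow_self_ge_power:
  assumes hF: "list_hom (F :: 'b list \<Rightarrow> 'b list)" and "count_list (F [c]) c \<ge> 2"
  shows "count_list ((F ^^ n) [c]) c \<ge> 2 ^ n"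
proof (induction n)
  case (Suc n)
  have "2 * 2 ^ n \<le> count_list (F [c]) c * count_list ((F ^^ n) [c]) c"
    using assms(2) Suc by (intro mult_le_mono) auto
  also have "\<dots> \<le> (\<Sum>z\<leftarrow>F [c]. count_list ((F ^^ n) [z]) c)"
    by (rule count_list_mult_le_sum_list)
  also have "\<dots> = count_list ((F ^^ Suc n) [c]) c"
    unfolding funpow_Suc_apply by (rule list_hom_count_list[OF list_hom_funpow[OF hF], symmetric])
  finally show ?case by simp
qed simp

lemma sum_lessThan_if_const: "(\<Sum>i<(N::nat). if P i then (c::nat) else 0) = c * card {i. i < N \<and> P i}"
proof -
  have "(\<Sum>i<N. if P i then c else 0) = (\<Sum>i\<in>{i\<in>{..<N}. P i}. c)"
    by (rule sum.inter_filter[symmetric]) simp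
  also have "{i\<in>{..<N}. P i} = {i. i < N \<and> P i}" by auto
  finally show ?thesis by (simp add: mult.commute)
qed

lemma length_list_hom_prefix_le:
  assumes hF: "list_hom F" and bound: "\<And>i. length (F [X i]) \<le> K"
  shows "length (F (prefix N X)) \<le> N + K * card {i. i < N \<and> F [X i] \<noteq> [X i]}"
proof -
  have "length (F (prefix N X)) = (\<Sum>i<N. length (F [X i]))"
    unfolding list_hom_length[OF hF, of "prefix N X"] by (rule sum_list_map_prefix)
  also have "\<dots> \<le> (\<Sum>i<N. 1 + (if F [X i] \<noteq> [X i] then K else 0))"
  proof (rule sum_mono)
    fix i show "length (F [X i]) \<le> 1 + (if F [X i] \<noteq> [X i] then K else 0)" using bound[of i] by auto
  qed
  also have "\<dots> = N + K * card {i. i < N \<and> F [X i] \<noteq> [X i]}"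
    unfolding sum.distrib sum_lessThan_if_const by simp
  finally show ?thesis .
qed

lemma eventually_length_list_hom_prefix_le:
  assumes hF: "list_hom F" and bound: "\<And>i. length (F [X i]) \<le> K"
    and density: "density_zero (\<lambda>i. F [X i] \<noteq> [X i])"
  shows "\<exists>N0. \<forall>N\<ge>N0. real (length (F (prefix N X))) \<le> 3/2 * real N"
proof -
  define c where "c N = real (card {i. i < N \<and> F [X i] \<noteq> [X i]})" for N
  obtain N0 where N0: "\<And>N. N \<ge> N0 \<Longrightarrow> \<bar>c N / real N\<bar> < 1 / (2 * (real K + 1))"
    using LIMSEQ_D[OF density[unfolded density_zero_def], of "1 / (2 * (real K + 1))"] by (auto simp: c_def)
  have "real (length (F (prefix N X))) \<le> 3/2 * real N" if N: "N \<ge> max N0 1" for N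
  proof -
    have "c N \<ge> 0" by (simp add: c_def)
    then have "c N < real N / (2 * (real K + 1))"
      using N0[of N] N by (simp add: field_simps)
    then have "real K * c N \<le> real K * (real N / (2 * (real K + 1)))" by (intro mult_left_mono) auto
    also have "\<dots> \<le> real N / 2" by (simp add: field_simps)
    finally have "real K * c N \<le> real N / 2" .
    moreover have "real (length (F (prefix N X))) \<le> real N + real K * c N"
      using length_list_hom_prefix_le[OF hF bound, where N=N] unfolding c_def
      by (simp only: of_nat_add[symmetric] of_nat_mult[symmetric] of_nat_le_iff)
    ultimately show ?thesis by simp
  qed
  then show ?thesis by blast
qed

text \<open>If a letter of X occurred twice in its own image, iterating F would make prefixes of X grow
  exponentially; but F changes only a density-zero set of letters of X, by a bounded amount, so prefixes
  grow by a factor of at most 3/2 per step.\<close>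

lemma count_list_image_self_le_1:
  fixes F :: "'b list \<Rightarrow> 'b list" and X :: "nat \<Rightarrow> 'b"
  assumes hF: "list_hom F" and fp: "fixes_word F X"
    and density: "density_zero (\<lambda>i. F [X i] \<noteq> [X i])"
    and bound: "\<And>i. length (F [X i]) \<le> K"
  shows "count_list (F [X j]) (X j) \<le> 1"
proof (rule ccontr)
  assume "\<not> count_list (F [X j]) (X j) \<le> 1"
  then have twice: "count_list (F [X j]) (X j) \<ge> 2" by simp
  define L where "L n = length ((F ^^ n) (prefix (Suc j) X))" for n
  have hp: "list_hom (F ^^ n)" for n by (rule list_hom_funpow[OF hF])
  have L_ge: "L n \<ge> 2 ^ n" for n
  proof -
    have "(F ^^ n) (prefix (Suc j) X) = (F ^^ n) (prefix j X) @ (F ^^ n) [X j]"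
      by (simp add: list_hom_append[OF hp])
    then have "length ((F ^^ n) [X j]) \<le> L n" by (simp add: L_def)
    then show ?thesis
      using count_le_length[of "(F ^^ n) [X j]" "X j"] count_list_funpow_self_ge_power[OF hF twice, of n] by linarith
  qed
  have L_Suc: "L (Suc n) = length (F (prefix (L n) X))" for n
    using fixes_wordD[OF fixes_word_funpow[OF fp, of n], of "Suc j"] by (simp add: L_def)
  obtain N0 where N0: "\<And>N. N \<ge> N0 \<Longrightarrow> real (length (F (prefix N X))) \<le> 3/2 * real N"
    using eventually_length_list_hom_prefix_le[OF hF bound density] by blast
  have bound: "real (L (N0 + t)) \<le> (3/2) ^ t * real (L N0)" for t
  proof (induction t)
    case (Suc t)
    have "N0 + t < 2 ^ (N0 + t)" by (rule less_exp)
    then have "N0 \<le> L (N0 + t)" using L_ge[of "N0 + t"] by linarith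
    then have "real (L (N0 + Suc t)) \<le> 3/2 * real (L (N0 + t))"
      using N0[of "L (N0 + t)"] by (simp add: L_Suc)
    also have "\<dots> \<le> 3/2 * ((3/2) ^ t * real (L N0))" using Suc by simp
    finally show ?case by simp
  qed simp
  obtain t where t: "real (L N0) < (4/3) ^ t" using real_arch_pow[of "4/3" "real (L N0)"] by auto
  have "(2::nat) ^ t \<le> L (N0 + t)" by (rule order_trans[OF power_increasing L_ge]) simp_all
  then have "(2::real) ^ t \<le> real (L (N0 + t))" by (metis of_nat_le_iff of_nat_numeral of_nat_power)
  also have "\<dots> \<le> (3/2) ^ t * real (L N0)" by (rule bound)
  also have "\<dots> < (3/2) ^ t * (4/3) ^ t" using t by simp
  also have "\<dots> = 2 ^ t" by (simp flip: power_mult_distrib)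
  finally show False by simp
qed

lemma list_hom_fixed_letters:
  assumes hF: "list_hom F" and nF: "nonerasing F" and fixed: "F xs = xs" and "z \<in> set xs"
  shows "F [z] = [z]"
  using fixed \<open>z \<in> set xs\<close>
proof (induction xs)
  case (Cons x xs)
  have split: "F [x] @ F xs = x # xs" using Cons.prems(1) list_hom_Cons[OF hF, of x xs] by simp
  have "F [x] \<noteq> []" using nF by (simp add: nonerasing_def)
  moreover have "length xs \<le> length (F xs)" by (rule nonerasing_length_le[OF hF nF])
  moreover have "length (F [x]) + length (F xs) = Suc (length xs)" using arg_cong[OF split, of length] by simp
  ultimately obtain a where "F [x] = [a]"
    by (cases "F [x]") (auto simp flip: length_0_conv)
  then show ?case using Cons split by auto
qed simp

lemma card_nonfixed_prefix_le:
  assumes hF: "list_hom F" and nF: "nonerasing F" and fp: "fixes_word F X"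
  shows "card {i. i < N \<and> F [X i] \<noteq> [X i]} \<le> (\<Sum>j<N. length (filter (\<lambda>z. F [z] \<noteq> [z]) (F [X j])))"
proof -
  define L where "L = length (F (prefix N X))"
  have "N \<le> L" unfolding L_def using nonerasing_length_le[OF hF nF, of "prefix N X"] by simp
  then have "card {i. i < N \<and> F [X i] \<noteq> [X i]} \<le> card {i. i < L \<and> F [X i] \<noteq> [X i]}"
    by (intro card_mono) auto
  also have "\<dots> = length (filter (\<lambda>z. F [z] \<noteq> [z]) (prefix L X))"
    unfolding length_filter_conv_card by (rule arg_cong[where f=card]) auto
  also have "prefix L X = F (prefix N X)" unfolding L_def by (rule fixes_wordD[OF fp, symmetric])
  also have "length (filter (\<lambda>z. F [z] \<noteq> [z]) (F (prefix N X)))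
      = (\<Sum>j<N. length (filter (\<lambda>z. F [z] \<noteq> [z]) (F [X j])))"
    unfolding list_hom_concat[OF hF, of "prefix N X"] filter_concat length_concat map_map comp_def
    by (rule sum_list_map_prefix)
  finally show ?thesis .
qed

text \<open>Letters of bounded growth are fixed by a suitable power of phi together with all letters of their
  images, and the other letters have frequency zero.\<close>

lemma density_nonfixed_letters_zero:
  fixes phi :: "'a::finite \<Rightarrow> 'a list" and w :: "nat \<Rightarrow> 'a"
  assumes ne: "non_erasing phi" and fp: "fixes_word (morph_ext phi) w"
    and freq: "\<And>a. (\<lambda>M. letter_count w a M / real M) \<longlonglongrightarrow> f a"
    and rare: "\<And>a. f a > 0 \<Longrightarrow> bounded_growth phi a"
    and idem: "\<And>a. bounded_growth phi a \<Longrightarrow> (morph_ext phi ^^ (m + m)) [a] = (morph_ext phi ^^ m) [a]"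
  shows "density_zero (\<lambda>i. (morph_ext phi ^^ m) [w i] \<noteq> [w i])"
proof -
  define psi where "psi = morph_ext phi ^^ m"
  define h where "h a = (if bounded_growth phi a then 0 else real (length (psi [a])))" for a
  have hP: "list_hom psi" and nP: "nonerasing psi"
    unfolding psi_def by (rule list_hom_funpow[OF list_hom_morph_ext],
      rule nonerasing_funpow[OF list_hom_morph_ext nonerasing_morph_ext[OF ne]])
  have fpP: "fixes_word psi w" unfolding psi_def by (rule fixes_word_funpow[OF fp])
  have fixed: "filter (\<lambda>z. psi [z] \<noteq> [z]) (psi [a]) = []" if "bounded_growth phi a" for a
  proof -
    have "psi (psi [a]) = psi [a]" using idem[OF that] by (simp add: psi_def funpow_add)
    then show ?thesis using list_hom_fixed_letters[OF hP nP] by (auto simp: filter_empty_conv)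
  qed
  show ?thesis unfolding psi_def[symmetric]
  proof (rule density_zero_if_card_le)
    show "real (card {i. i < N \<and> psi [w i] \<noteq> [w i]}) \<le> (\<Sum>a\<in>UNIV. h a * letter_count w a N)" for N
    proof -
      have "real (card {i. i < N \<and> psi [w i] \<noteq> [w i]})
          \<le> (\<Sum>j<N. real (length (filter (\<lambda>z. psi [z] \<noteq> [z]) (psi [w j]))))"
        using card_nonfixed_prefix_le[OF hP nP fpP, of N] by (simp flip: of_nat_sum)
      also have "\<dots> \<le> (\<Sum>j<N. h (w j))"
        by (intro sum_mono) (auto simp: h_def fixed)
      finally show ?thesis by (simp only: sum_lessThan_by_letter_count)
    qed
    have "h a * f a = 0" for a
      using rare[of a] letter_frequency_nonneg[OF freq, of a] by (cases "bounded_growth phi a") (auto simp: h_def)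
    then have "(\<Sum>a\<in>UNIV. h a * f a) = 0" by (simp only: sum.neutral_const)
    then show "(\<lambda>N. (\<Sum>a\<in>UNIV. h a * letter_count w a N) / real N) \<longlonglongrightarrow> 0"
      using LIMSEQ_sum_letter_count(1)[OF freq, of h] by simp
  qed
qed

lemma regular_growth_ratio_Suc:
  assumes "regular_growth A B"
  shows "(\<lambda>n. A (Suc n) / A n) \<longlonglongrightarrow> 1"
proof -
  obtain d C where pos: "\<forall>n. A n > 0" and "C > 0" and C: "(\<lambda>n. A n / real n ^ d) \<longlonglongrightarrow> C"
    using assms unfolding regular_growth_def by blast
  have "(\<lambda>n. (A (Suc n) / real (Suc n) ^ d) / (A n / real n ^ d) * (real (Suc n) / real n) ^ d) \<longlonglongrightarrow> C / C * 1 ^ d"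
    by (intro tendsto_intros LIMSEQ_Suc[OF C] C LIMSEQ_Suc_n_over_n) (use \<open>C > 0\<close> in simp)
  then have "(\<lambda>n. (A (Suc n) / real (Suc n) ^ d) / (A n / real n ^ d) * (real (Suc n) / real n) ^ d) \<longlonglongrightarrow> 1"
    using \<open>C > 0\<close> by simp
  moreover have "eventually (\<lambda>n. (A (Suc n) / real (Suc n) ^ d) / (A n / real n ^ d) * (real (Suc n) / real n) ^ d
      = A (Suc n) / A n) sequentially"
  proof (rule eventually_sequentiallyI[of 1])
    fix n :: nat assume "n \<ge> 1"
    moreover have "A n \<noteq> 0" using pos by (metis less_irrefl)
    ultimately show "(A (Suc n) / real (Suc n) ^ d) / (A n / real n ^ d) * (real (Suc n) / real n) ^ d
      = A (Suc n) / A n" by (simp add: power_divide field_simps)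
  qed
  ultimately show ?thesis by (rule Lim_transform_eventually)
qed

text \<open>Along the prefixes F^n(X 0) the frequency converges, and the lengths of consecutive such
  prefixes are asymptotically equal, so the frequency converges along all prefixes.\<close>

lemma convergent_count_ratio_regular_growth:
  fixes F :: "'b list \<Rightarrow> 'b list" and X :: "nat \<Rightarrow> 'b"
  assumes hF: "list_hom F" and nF: "nonerasing F" and fp: "fixes_word F X"
    and seed: "F [X 0] = X 0 # rest" "rest \<noteq> []"
    and reg: "regular_growth (\<lambda>n. real (length ((F ^^ n) [X 0]))) (\<lambda>n. real (count_list ((F ^^ n) [X 0]) v))"
  shows "convergent (\<lambda>N. real (count_list (prefix N X) v) / real N)"
proof (rule convergent_if_eventually_in_small_intervals)
  fix e :: real assume "e > 0"
  define l where "l n = length ((F ^^ n) [X 0])" for n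
  define c where "c n = count_list ((F ^^ n) [X 0]) v" for n
  obtain \<rho> where \<rho>: "(\<lambda>n. real (c n) / real (l n)) \<longlonglongrightarrow> \<rho>"
    using reg unfolding regular_growth_def l_def c_def by blast
  have l_pos: "real (l n) > 0" for n using reg unfolding regular_growth_def l_def by blast
  then have l_nz: "l n \<noteq> 0" for n by (metis of_nat_0 less_irrefl)
  have ratio: "(\<lambda>n. real (l (Suc n)) / real (l n)) \<longlonglongrightarrow> 1"
    using regular_growth_ratio_Suc[OF reg] unfolding l_def .
  have hp: "list_hom (F ^^ n)" for n by (rule list_hom_funpow[OF hF])
  have l_Suc: "l n + 1 \<le> l (Suc n)" for n
  proof -
    have "(F ^^ Suc n) [X 0] = (F ^^ n) [X 0] @ (F ^^ n) rest"
      unfolding funpow_Suc_apply seed(1) by (rule list_hom_Cons[OF hp])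
    moreover have "length rest \<le> length ((F ^^ n) rest)"
      by (rule nonerasing_length_le[OF hp nonerasing_funpow[OF hF nF]])
    ultimately show ?thesis using seed(2) by (cases rest) (auto simp: l_def)
  qed
  have "count_list (prefix (l n) X) v = c n" for n
    using fixes_wordD[OF fixes_word_funpow[OF fp, of n], of 1] by (simp add: l_def c_def subsequence_def)
  then have "\<exists>N0. \<forall>N\<ge>N0. \<rho> - e/4 \<le> real (count_list (prefix N X) v) / real N
      \<and> real (count_list (prefix N X) v) / real N \<le> \<rho> + e/4"
  proof (intro density_sandwich[where L=l and lo="\<lambda>n. real (c n)" and hi="\<lambda>n. real (c n)"])
    show "mono l" unfolding mono_iff_le_Suc using l_Suc by (simp add: Suc_leD)
    have "n \<le> l n" for n by (induction n) (use l_Suc in \<open>auto intro: order_trans\<close>)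
    then show "\<exists>M. l M > B" for B by (intro exI[of _ "Suc B"]) (simp add: Suc_le_lessD)
    have "(\<lambda>n. (real (c n) / real (l n)) / (real (l (Suc n)) / real (l n))) \<longlonglongrightarrow> \<rho> / 1"
      by (intro tendsto_divide \<rho> ratio) simp
    then show "(\<lambda>n. real (c n) / real (l (Suc n))) \<longlonglongrightarrow> \<rho>" using l_nz by (simp add: divide_simps)
    have "(\<lambda>n. (real (c (Suc n)) / real (l (Suc n))) * (real (l (Suc n)) / real (l n))) \<longlonglongrightarrow> \<rho> * 1"
      by (intro tendsto_mult LIMSEQ_Suc[OF \<rho>] ratio)
    then show "(\<lambda>n. real (c (Suc n)) / real (l n)) \<longlonglongrightarrow> \<rho>" using l_nz by (simp add: divide_simps)
  qed (use l_pos \<open>e > 0\<close> mono_count_list_prefix in auto)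
  moreover have "(\<rho> + e/4) - (\<rho> - e/4) < e" using \<open>e > 0\<close> by simp
  ultimately show "\<exists>\<alpha> \<beta> N0. \<beta> - \<alpha> < e \<and> (\<forall>N\<ge>N0. \<alpha> \<le> real (count_list (prefix N X) v) / real N
      \<and> real (count_list (prefix N X) v) / real N \<le> \<beta>)" by blast
qed

lemma set_list_hom_letter_subset: "list_hom G \<Longrightarrow> z \<in> set xs \<Longrightarrow> set (G [z]) \<subseteq> set (G xs)"
  by (subst list_hom_concat[of G xs]) auto

lemma mem_set_funpow_trans:
  assumes hF: "list_hom F" and "z \<in> set ((F ^^ a) [y])" and "x \<in> set ((F ^^ b) [z])"
  shows "x \<in> set ((F ^^ (b + a)) [y])"
  using set_list_hom_letter_subset[OF list_hom_funpow[OF hF] assms(2), of b] assms(3)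
  by (auto simp: funpow_add)

lemma not_mem_funpow_sibling:
  assumes hF: "list_hom F" and split: "F [y] = \<alpha> @ y # \<beta>" and z: "z \<in> set (\<alpha> @ \<beta>)"
    and once: "\<And>p. p \<ge> 1 \<Longrightarrow> count_list ((F ^^ p) [y]) y \<le> 1"
  shows "y \<notin> set ((F ^^ n) [z])"
proof
  assume y: "y \<in> set ((F ^^ n) [z])"
  have hp: "list_hom (F ^^ n)" by (rule list_hom_funpow[OF hF])
  have count: "count_list xs y \<noteq> 0" if "y \<in> set xs" for xs using that by (simp add: count_list_0_iff)
  have yy: "y \<in> set ((F ^^ n) [y])"
  proof (induction n)
    case (Suc n)
    have "y \<in> set ((F ^^ 1) [y])" using split by simp
    from mem_set_funpow_trans[OF hF Suc this] show ?case by simp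
  qed simp
  have "y \<in> set ((F ^^ n) (\<alpha> @ \<beta>))" using set_list_hom_letter_subset[OF hp z] y by blast
  moreover have "count_list ((F ^^ Suc n) [y]) y = count_list ((F ^^ n) (\<alpha> @ \<beta>)) y + count_list ((F ^^ n) [y]) y"
    unfolding funpow_Suc_apply split list_hom_append[OF hp] list_hom_Cons[OF hp, of y \<beta>] by simp
  ultimately have "count_list ((F ^^ Suc n) [y]) y \<ge> 2"
    using count[OF yy] count[of "(F ^^ n) (\<alpha> @ \<beta>)"] by simp
  then show False using once[of "Suc n"] by simp
qed

text \<open>Order letters by reachability: z is below y if z occurs in some image of y but not conversely.
  This order is well-founded on a finite closed set, and a letter that reaches itself does so in one
  step and, occurring only once, cannot be reached back from the other letters of its image.\<close>

lemma triangular_on_if_letters_occur_once: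
  fixes F :: "'b list \<Rightarrow> 'b list"
  assumes hF: "list_hom F" and "finite S"
    and closed: "\<forall>y\<in>S. set (F [y]) \<subseteq> S"
    and once: "\<forall>c\<in>S. \<forall>p\<ge>1. count_list ((F ^^ p) [c]) c \<le> 1"
    and recur: "\<forall>y\<in>S. (\<exists>n\<ge>1. y \<in> set ((F ^^ n) [y])) \<longrightarrow> y \<in> set (F [y])"
  shows "\<exists>r. wf r \<and> triangular_on S r F"
proof -
  define R where "R y = {z. \<exists>n\<ge>1. z \<in> set ((F ^^ n) [y])}" for y
  have R_trans: "x \<in> R y" if zy: "z \<in> R y" and xz: "x \<in> R z" for x y z
  proof -
    obtain a b where "a \<ge> 1" "z \<in> set ((F ^^ a) [y])" "b \<ge> 1" "x \<in> set ((F ^^ b) [z])"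
      using zy xz unfolding R_def by blast
    then show ?thesis using mem_set_funpow_trans[OF hF] by (auto simp: R_def intro!: exI[of _ "b + a"])
  qed
  have R_image: "z \<in> R y" if "z \<in> set (F [y])" for y z using that by (auto simp: R_def intro!: exI[of _ 1])
  define r where "r = {(z, y). z \<in> S \<and> y \<in> S \<and> z \<in> R y \<and> y \<notin> R z}"
  have "trans r" unfolding trans_def r_def using R_trans by blast
  then have "acyclic r" unfolding acyclic_def using trancl_id by (auto simp: r_def)
  moreover have "finite r" by (rule finite_subset[of r "S \<times> S"]) (use \<open>finite S\<close> in \<open>auto simp: r_def\<close>)
  ultimately have "wf r" by (rule finite_acyclic_wf[rotated])
  moreover have "triangular_on S r F" unfolding triangular_on_def
  proof
    fix y assume y: "y \<in> S"
    have below: "(z, y) \<in> r" if "z \<in> set (F [y])" "y \<notin> R z" for z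
      using that y closed R_image by (auto simp: r_def)
    show "(\<forall>z\<in>set (F [y]). (z, y) \<in> r) \<or> (\<exists>\<alpha> \<beta>. F [y] = \<alpha> @ y # \<beta> \<and> (\<forall>z\<in>set (\<alpha> @ \<beta>). (z, y) \<in> r))"
    proof (cases "y \<in> R y")
      case True
      then have "y \<in> set (F [y])" using recur y by (auto simp: R_def)
      then obtain \<alpha> \<beta> where split: "F [y] = \<alpha> @ y # \<beta>" by (metis split_list)
      have "(z, y) \<in> r" if "z \<in> set (\<alpha> @ \<beta>)" for z
        using not_mem_funpow_sibling[OF hF split that] once y below[of z] that split by (auto simp: R_def)
      then show ?thesis using split by blast
    next
      case False
      then show ?thesis using below R_trans R_image by blast
    qed
  qed
  ultimately show ?thesis by blast
qed

lemma funpow_fixed_letter: "F [z] = [z] \<Longrightarrow> (F ^^ p) [z] = [z]"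
  by (induction p) auto

lemma set_funpow_seed_subset_range:
  assumes "fixes_word F X"
  shows "set ((F ^^ n) [X 0]) \<subseteq> range X"
proof -
  define L where "L = length ((F ^^ n) [X 0])"
  have "(F ^^ n) [X 0] = map X [0..<L]"
    using fixes_wordD[OF fixes_word_funpow[OF assms, of n], of 1] by (simp add: subsequence_def L_def)
  then show ?thesis by auto
qed

lemma fixes_word_seed:
  assumes "fixes_word F X" and "length (F [X 0]) \<ge> 2"
  obtains rest where "F [X 0] = X 0 # rest" "rest \<noteq> []"
proof -
  have "F [X 0] \<noteq> []" using assms(2) by auto
  have "F [X 0] = prefix (length (F [X 0])) X"
    using fixes_wordD[OF assms(1), of 1] by (simp add: subsequence_def)
  also have "\<dots> = X 0 # map X [1..<length (F [X 0])]"
    using \<open>F [X 0] \<noteq> []\<close> by (simp add: subsequence_def upt_rec)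
  finally show thesis by (rule that) (use \<open>F [X 0] \<noteq> []\<close> assms(2) in simp)
qed

lemma letters_occur_once_in_fixed_word:
  fixes F :: "'b list \<Rightarrow> 'b list" and X :: "nat \<Rightarrow> 'b"
  assumes hF: "list_hom F" and fp: "fixes_word F X" and fin: "finite (range X)"
    and density: "density_zero (\<lambda>i. F [X i] \<noteq> [X i])" and "p \<ge> 1"
  shows "count_list ((F ^^ p) [X j]) (X j) \<le> 1"
proof (rule count_list_image_self_le_1[OF list_hom_funpow[OF hF] fixes_word_funpow[OF fp]])
  show "density_zero (\<lambda>i. (F ^^ p) [X i] \<noteq> [X i])"
  proof (rule density_zero_mono[OF density])
    fix i assume "(F ^^ p) [X i] \<noteq> [X i]"
    then show "F [X i] \<noteq> [X i]" using funpow_fixed_letter[of F "X i" p] by auto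
  qed
  show "length ((F ^^ p) [X i]) \<le> Max ((\<lambda>y. length ((F ^^ p) [y])) ` range X)" for i
    by (rule Max_ge) (simp_all add: fin)
qed

text \<open>The letters reachable from X 0 form a finite closed alphabet, none of whose letters occurs twice
  in one of its own iterated images; F is therefore triangular there.\<close>

lemma convergent_count_ratio_fixed_word:
  fixes F :: "'b list \<Rightarrow> 'b list" and X :: "nat \<Rightarrow> 'b"
  assumes hF: "list_hom F" and nF: "nonerasing F" and fp: "fixes_word F X" and fin: "finite (range X)"
    and density: "density_zero (\<lambda>i. F [X i] \<noteq> [X i])"
    and recur: "\<And>i n. n \<ge> 1 \<Longrightarrow> X i \<in> set ((F ^^ n) [X i]) \<Longrightarrow> X i \<in> set (F [X i])"
    and seed: "F [X 0] = X 0 # rest" "rest \<noteq> []"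
  shows "convergent (\<lambda>N. real (count_list (prefix N X) v) / real N)"
proof -
  define S where "S = (\<Union>n. set ((F ^^ n) [X 0]))"
  have S: "S \<subseteq> range X" unfolding S_def using set_funpow_seed_subset_range[OF fp] by blast
  have closed: "\<forall>y\<in>S. set (F [y]) \<subseteq> S"
  proof
    fix y assume "y \<in> S"
    then obtain n where "y \<in> set ((F ^^ n) [X 0])" by (auto simp: S_def)
    then have "set (F [y]) \<subseteq> set ((F ^^ Suc n) [X 0])" using set_list_hom_letter_subset[OF hF] by simp
    then show "set (F [y]) \<subseteq> S" unfolding S_def by blast
  qed
  have "\<exists>r. wf r \<and> triangular_on S r F"
  proof (rule triangular_on_if_letters_occur_once[OF hF finite_subset[OF S fin] closed])
    show "\<forall>c\<in>S. \<forall>p\<ge>1. count_list ((F ^^ p) [c]) c \<le> 1"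
      using letters_occur_once_in_fixed_word[OF hF fp fin density] S by blast
    show "\<forall>y\<in>S. (\<exists>n\<ge>1. y \<in> set ((F ^^ n) [y])) \<longrightarrow> y \<in> set (F [y])"
      using recur S by blast
  qed
  then obtain r where "wf r" "triangular_on S r F" by blast
  moreover have "X 0 \<in> S" by (auto simp: S_def intro: exI[of _ 0])
  ultimately show ?thesis
    by (intro convergent_count_ratio_regular_growth[OF hF nF fp seed] regular_growth_of_triangular[OF hF nF _ closed])
qed

lemma block_morph_funpow_fixed_block:
  assumes k: "0 < k" and ne: "non_erasing phi" and y: "length y = k"
    and fixed: "\<forall>z\<in>set y. (morph_ext phi ^^ m) [z] = [z]"
  shows "(morph_ext (block_morph k phi) ^^ m) [y] = [y]"
proof -
  define psi where "psi = morph_ext phi ^^ m"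
  have "psi y = concat (map (\<lambda>z. psi [z]) y)" unfolding psi_def by (rule list_hom_concat[OF list_hom_funpow[OF list_hom_morph_ext]])
  also have "\<dots> = y" using fixed by (induction y) (auto simp: psi_def)
  finally have "psi y = y" .
  moreover have "psi [hd y] = [hd y]" using fixed y k by (cases y) (auto simp: psi_def)
  ultimately show ?thesis
    using block_morph_funpow_letter[OF k ne y, of m] y by (simp add: psi_def windows_def)
qed

lemma density_nonfixed_blocks_zero:
  assumes k: "0 < k" and ne: "non_erasing phi"
    and density: "density_zero (\<lambda>i. (morph_ext phi ^^ m) [w i] \<noteq> [w i])"
  shows "density_zero (\<lambda>i. (morph_ext (block_morph k phi) ^^ m) [block_word k w i] \<noteq> [block_word k w i])"
proof (rule density_zero_shift[OF density])
  fix i assume "(morph_ext (block_morph k phi) ^^ m) [block_word k w i] \<noteq> [block_word k w i]"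
  then have "\<not> (\<forall>z\<in>set (block_word k w i). (morph_ext phi ^^ m) [z] = [z])"
    using block_morph_funpow_fixed_block[OF k ne length_block_word] by blast
  then obtain j where "i \<le> j" "j < i + k" "(morph_ext phi ^^ m) [w j] \<noteq> [w j]"
    by (auto simp: block_word_def subsequence_def)
  then show "\<exists>t<k. (morph_ext phi ^^ m) [w (i + t)] \<noteq> [w (i + t)]"
    by (intro exI[of _ "j - i"]) auto
qed

lemma convergent_block_count_ratio_bounded_letters:
  fixes phi :: "'a::finite \<Rightarrow> 'a list" and w :: "nat \<Rightarrow> 'a"
  assumes k: "0 < k" and ne: "non_erasing phi" and fp: "fixes_word (morph_ext phi) w"
    and freq: "\<And>a. (\<lambda>M. letter_count w a M / real M) \<longlonglongrightarrow> f a"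
    and rare: "\<And>a. f a > 0 \<Longrightarrow> bounded_growth phi a"
    and seed: "phi b = b # u" "u \<noteq> []" "w 0 = b"
  shows "convergent (\<lambda>N. real (count_list (prefix N (block_word k w)) v) / real N)"
proof -
  obtain m where "m \<ge> 1"
    and idem: "\<And>a. bounded_growth phi a \<Longrightarrow> (morph_ext phi ^^ (m + m)) [a] = (morph_ext phi ^^ m) [a]"
    and recur: "\<And>y n. length y = k \<Longrightarrow> n \<ge> 1 \<Longrightarrow> y \<in> set ((morph_ext (block_morph k phi) ^^ n) [y])
      \<Longrightarrow> y \<in> set ((morph_ext (block_morph k phi) ^^ m) [y])"
    using exists_stabilizing_power[OF k ne] by blast
  define F where "F = morph_ext (block_morph k phi) ^^ m"
  define W where "W = block_word k w"
  have hF: "list_hom F" and nF: "nonerasing F"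
    unfolding F_def by (rule list_hom_funpow[OF list_hom_morph_ext],
      rule nonerasing_funpow[OF list_hom_morph_ext nonerasing_block_morph[OF ne]])
  have fpF: "fixes_word F W"
    unfolding F_def W_def by (rule fixes_word_block_word[OF k ne fixes_word_funpow[OF fp]])
  have "range W \<subseteq> {y. set y \<subseteq> UNIV \<and> length y = k}" by (auto simp: W_def)
  then have fin: "finite (range W)" by (rule finite_subset) (rule finite_lists_length_eq, simp)
  have "length ((morph_ext phi ^^ m) [b]) \<ge> 2"
    using morph_ext_funpow_seed_length[of phi b u m, OF ne seed(1,2)] \<open>m \<ge> 1\<close> by simp
  moreover have "hd (W 0) = b" using k seed(3) by (simp add: W_def block_word_def subsequence_def hd_map)
  ultimately have "length (F [W 0]) \<ge> 2"
    using block_morph_funpow_letter[OF k ne, of "W 0" m] by (simp add: F_def W_def)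
  then obtain rest where "F [W 0] = W 0 # rest" "rest \<noteq> []" by (rule fixes_word_seed[OF fpF])
  then show ?thesis unfolding W_def[symmetric]
  proof (rule convergent_count_ratio_fixed_word[OF hF nF fpF fin, rotated 2])
    show "density_zero (\<lambda>i. F [W i] \<noteq> [W i])"
      unfolding F_def W_def
      by (rule density_nonfixed_blocks_zero[OF k ne density_nonfixed_letters_zero[OF ne fp freq rare idem]])
    fix i n assume "n \<ge> 1" "W i \<in> set ((F ^^ n) [W i])"
    then show "W i \<in> set (F [W i])"
      using recur[of "W i" "m * n"] \<open>m \<ge> 1\<close> by (simp add: F_def W_def funpow_mult)
  qed
qed

lemma convergent_block_count_ratio:
  fixes phi :: "'a::finite \<Rightarrow> 'a list" and w :: "nat \<Rightarrow> 'a"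
  assumes k: "0 < k" and ne: "non_erasing phi" and fp: "fixes_word (morph_ext phi) w"
    and freq: "\<And>a. (\<lambda>M. letter_count w a M / real M) \<longlonglongrightarrow> f a"
    and seed: "phi b = b # u" "u \<noteq> []" "w 0 = b"
  shows "convergent (\<lambda>N. real (count_list (prefix N (block_word k w)) v) / real N)"
proof (cases "\<exists>a. f a > 0 \<and> \<not> bounded_growth phi a")
  case True
  then obtain a where a: "f a > 0" "\<not> bounded_growth phi a" by blast
  have "\<exists>n. real (length ((morph_ext phi ^^ n) [a])) > B" for B
    using a(2) unfolding bounded_growth_def by (metis le_nat_floor not_le)
  then show ?thesis by (rule convergent_block_count_ratio_growing_letter[OF k ne fp freq a(1)])
next
  case False
  then show ?thesis by (intro convergent_block_count_ratio_bounded_letters[OF k ne fp freq _ seed]) blast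
qed

lemma letter_frequencies:
  assumes "\<forall>a. freq_exists w [a]"
  obtains f where "\<And>a. (\<lambda>M. letter_count w a M / real M) \<longlonglongrightarrow> f a"
proof -
  have "occ_count w [a] M = count_list (prefix M w) a" for a M
    unfolding occ_count_def count_list_prefix by (simp add: occurs_at_def)
  then have "\<exists>L. (\<lambda>M. letter_count w a M / real M) \<longlonglongrightarrow> L" for a
    using assms unfolding freq_exists_def letter_count_def by presburger
  then show thesis using that someI_ex by metis
qed

theorem theorem1:
  fixes phi :: "'a::finite \<Rightarrow> 'a list" and w :: "nat \<Rightarrow> 'a"
  assumes "non_erasing phi"
    and "pure_morphic_gen phi w"
    and "\<forall>a. freq_exists w [a]"
  shows "\<forall>v. is_factor v w \<longrightarrow> freq_exists w v"
proof (intro allI impI)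
  fix v assume "is_factor v w"
  then have "0 < length v" by (simp add: is_factor_def)
  obtain b u where seed: "phi b = b # u" "u \<noteq> []" "w 0 = b" and fp: "fixes_word (morph_ext phi) w"
    using pure_morphic_gen_fixes_word[OF assms(1,2)] by blast
  obtain f where "\<And>a. (\<lambda>M. letter_count w a M / real M) \<longlonglongrightarrow> f a"
    using letter_frequencies[OF assms(3)] by blast
  from convergent_block_count_ratio[OF \<open>0 < length v\<close> assms(1) fp this seed]
  show "freq_exists w v"
    unfolding freq_exists_def occ_count_block_word convergent_def .
qed

end
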